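(* Let $H$ be a $k$-linear semi-Hopf category and $A$ a right $H$-comodule category with $B=A^{{\rm co}H}$. Assume that (1) each $A_{xy}$ is a finitely generated projective left $B_x$-module; (2) each $H_{xy}$ is a finitely generated projective $k$-module; (3) for all $x,y\in X$ the maps $\delta^x_{xy}:{\rm Hom}_k(H_{xy},A_{yx})\to{}_{B_x}{\rm Hom}(A_{xy},A_{xx})$ and $\delta^x_{yy}:{\rm Hom}_k(H_{xy},A_{yy})\to{}_{B_x}{\rm Hom}(A_{xy},A_{xy})$, given by $\delta(g)(a)=a_{[0]}g(a_{[1]})$, are bijective. Then $A$ is an $H$-Galois category extension of $B$, i.e. all maps ${\rm can}^z_{xy}$ are bijective.
   Context: Let $k$ be a commutative ring; unadorned $\otimes$ is over $k$. A $k$-linear category $A$ with class of objects $X$ consists of $k$-modules $A_{xy}$, associative compositions $A_{xy}\otimes A_{yz}\to A_{xz}$, $a\otimes b\mapsto ab$, and units $1_x\in A_{xx}$. A $k$-linear semi-Hopf category $H$ (objects $X$) is a $k$-linear category in which each $H_{xy}$ is a $k$-coalgebra with $\Delta_{xy}(h)=h_{(1)}\otimes h_{(2)}$ and counit $\varepsilon_{xy}$, such that $\Delta_{xz}(hh')=h_{(1)}h'_{(1)}\otimes h_{(2)}h'_{(2)}$, $\Delta_{xx}(1_x)=1_x\otimes1_x$, $\varepsilon_{xz}(hh')=\varepsilon_{xy}(h)\varepsilon_{yz}(h')$, $\varepsilon_{xx}(1_x)=1$. A right $H$-comodule category is a $k$-linear category $A$ with objects $X$ such that each $A_{xy}$ is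 a right $H_{xy}$-comodule, $\rho_{xy}(a)=a_{[0]}\otimes a_{[1]}$, with $\rho_{xz}(ab)=a_{[0]}b_{[0]}\otimes a_{[1]}b_{[1]}$ and $\rho_{xx}(1_x)=1_x\otimes1_x$. Its coinvariants are $B_x=\{a\in A_{xx}\mid\rho_{xx}(a)=a\otimes1_x\}$; $A_{xy}$ is a $B_x$-$B_y$-bimodule by multiplication. The canonical maps are ${\rm can}^z_{xy}:A_{zx}\otimes_{B_x}A_{xy}\to A_{zy}\otimes H_{xy}$, $a\otimes_{B_x}a'\mapsto aa'_{[0]}\otimes a'_{[1]}$; $A$ is an $H$-Galois category extension of $B$ if they are all bijective. *)

theory Defs
  imports Main "HOL-Library.FuncSet" "HOL-Library.Function_Algebras"
begin

text \<open>An element of a tensor product M \<otimes>_R N is represented by a finite list of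
pairs [(m1,n1),...,(mr,nr)] standing for the sum m1\<otimes>n1 + ... + mr\<otimes>nr.
Two such lists represent the same element iff the difference of their images in the
free abelian group on M \<times> N (functions with integer values, here given by occurrence
counts) lies in the subgroup generated by the usual bilinearity and balancing
relations.\<close>

definition fdelta :: "'b \<Rightarrow> 'b \<Rightarrow> int" where
  "fdelta p = (\<lambda>q. if q = p then 1 else 0)"

definition fcount :: "'b list \<Rightarrow> 'b \<Rightarrow> int" where
  "fcount xs = (\<lambda>q. int (count_list xs q))"

inductive_set zspan :: "('b \<Rightarrow> int) set \<Rightarrow> ('b \<Rightarrow> int) set" for S where
  zspan_zero: "(\<lambda>_. 0) \<in> zspan S"
| zspan_add: "f \<in> S \<Longrightarrow> g \<in> zspan S \<Longrightarrow> (\<lambda>q. g q + f q) \<in> zspan S"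
| zspan_diff: "f \<in> S \<Longrightarrow> g \<in> zspan S \<Longrightarrow> (\<lambda>q. g q - f q) \<in> zspan S"

definition tensor_rels ::
  "'m::ab_group_add set \<Rightarrow> 'n::ab_group_add set \<Rightarrow> 'r set \<Rightarrow> ('m \<Rightarrow> 'r \<Rightarrow> 'm) \<Rightarrow> ('r \<Rightarrow> 'n \<Rightarrow> 'n)
     \<Rightarrow> ('m \<times> 'n \<Rightarrow> int) set" where
  "tensor_rels M N R ract lact =
     {(\<lambda>q. fdelta (m + m', n) q - fdelta (m, n) q - fdelta (m', n) q) | m m' n.
         m \<in> M \<and> m' \<in> M \<and> n \<in> N}
   \<union> {(\<lambda>q. fdelta (m, n + n') q - fdelta (m, n) q - fdelta (m, n') q) | m n n'.
         m \<in> M \<and> n \<in> N \<and> n' \<in> N}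
   \<union> {(\<lambda>q. fdelta (ract m r, n) q - fdelta (m, lact r n) q) | m r n.
         m \<in> M \<and> r \<in> R \<and> n \<in> N}"

definition tensor_eq ::
  "'m::ab_group_add set \<Rightarrow> 'n::ab_group_add set \<Rightarrow> 'r set \<Rightarrow> ('m \<Rightarrow> 'r \<Rightarrow> 'm) \<Rightarrow> ('r \<Rightarrow> 'n \<Rightarrow> 'n)
     \<Rightarrow> ('m \<times> 'n) list \<Rightarrow> ('m \<times> 'n) list \<Rightarrow> bool" where
  "tensor_eq M N R ract lact xs ys \<longleftrightarrow>
     set xs \<subseteq> M \<times> N \<and> set ys \<subseteq> M \<times> N \<and>
     (\<lambda>q. fcount xs q - fcount ys q) \<in> zspan (tensor_rels M N R ract lact)"

definition ktensor_eq ::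
  "'m::ab_group_add set \<Rightarrow> ('k \<Rightarrow> 'm \<Rightarrow> 'm) \<Rightarrow> 'n::ab_group_add set \<Rightarrow> ('k \<Rightarrow> 'n \<Rightarrow> 'n)
     \<Rightarrow> ('m \<times> 'n) list \<Rightarrow> ('m \<times> 'n) list \<Rightarrow> bool" where
  "ktensor_eq M sM N sN = tensor_eq M N UNIV (\<lambda>m c. sM c m) sN"

definition ktensor3_rels ::
  "'l::ab_group_add set \<Rightarrow> ('k \<Rightarrow> 'l \<Rightarrow> 'l) \<Rightarrow> 'm::ab_group_add set \<Rightarrow> ('k \<Rightarrow> 'm \<Rightarrow> 'm)
     \<Rightarrow> 'n::ab_group_add set \<Rightarrow> ('k \<Rightarrow> 'n \<Rightarrow> 'n) \<Rightarrow> ('l \<times> 'm \<times> 'n \<Rightarrow> int) set" where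
  "ktensor3_rels L sL M sM N sN =
     {(\<lambda>q. fdelta (l + l', m, n) q - fdelta (l, m, n) q - fdelta (l', m, n) q) | l l' m n.
         l \<in> L \<and> l' \<in> L \<and> m \<in> M \<and> n \<in> N}
   \<union> {(\<lambda>q. fdelta (l, m + m', n) q - fdelta (l, m, n) q - fdelta (l, m', n) q) | l m m' n.
         l \<in> L \<and> m \<in> M \<and> m' \<in> M \<and> n \<in> N}
   \<union> {(\<lambda>q. fdelta (l, m, n + n') q - fdelta (l, m, n) q - fdelta (l, m, n') q) | l m n n'.
         l \<in> L \<and> m \<in> M \<and> n \<in> N \<and> n' \<in> N}
   \<union> {(\<lambda>q. fdelta (sL c l, m, n) q - fdelta (l, sM c m, n) q) | c l m n.
         l \<in> L \<and> m \<in> M \<and> n \<in> N}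
   \<union> {(\<lambda>q. fdelta (l, sM c m, n) q - fdelta (l, m, sN c n) q) | c l m n.
         l \<in> L \<and> m \<in> M \<and> n \<in> N}"

definition ktensor3_eq ::
  "'l::ab_group_add set \<Rightarrow> ('k \<Rightarrow> 'l \<Rightarrow> 'l) \<Rightarrow> 'm::ab_group_add set \<Rightarrow> ('k \<Rightarrow> 'm \<Rightarrow> 'm)
     \<Rightarrow> 'n::ab_group_add set \<Rightarrow> ('k \<Rightarrow> 'n \<Rightarrow> 'n)
     \<Rightarrow> ('l \<times> 'm \<times> 'n) list \<Rightarrow> ('l \<times> 'm \<times> 'n) list \<Rightarrow> bool" where
  "ktensor3_eq L sL M sM N sN xs ys \<longleftrightarrow>
     set xs \<subseteq> L \<times> M \<times> N \<and> set ys \<subseteq> L \<times> M \<times> N \<and>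
     (\<lambda>q. fcount xs q - fcount ys q) \<in> zspan (ktensor3_rels L sL M sM N sN)"

text \<open>A k-module: a subgroup M of an ambient abelian group with a k-action.\<close>
definition kmodule :: "'m::ab_group_add set \<Rightarrow> ('k::comm_ring_1 \<Rightarrow> 'm \<Rightarrow> 'm) \<Rightarrow> bool" where
  "kmodule M s \<longleftrightarrow>
     0 \<in> M \<and> (\<forall>a\<in>M. \<forall>b\<in>M. a + b \<in> M) \<and> (\<forall>a\<in>M. - a \<in> M) \<and>
     (\<forall>c. \<forall>a\<in>M. s c a \<in> M) \<and>
     (\<forall>c. \<forall>a\<in>M. \<forall>b\<in>M. s c (a + b) = s c a + s c b) \<and>
     (\<forall>c d. \<forall>a\<in>M. s (c + d) a = s c a + s d a) \<and>
     (\<forall>c d. \<forall>a\<in>M. s (c * d) a = s c (s d a)) \<and>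
     (\<forall>a\<in>M. s 1 a = a)"

definition lin_map ::
  "'r set \<Rightarrow> 'm::ab_group_add set \<Rightarrow> ('r \<Rightarrow> 'm \<Rightarrow> 'm) \<Rightarrow> 'n::ab_group_add set \<Rightarrow> ('r \<Rightarrow> 'n \<Rightarrow> 'n)
     \<Rightarrow> ('m \<Rightarrow> 'n) \<Rightarrow> bool" where
  "lin_map R M actM N actN f \<longleftrightarrow>
     (\<forall>m\<in>M. f m \<in> N) \<and> (\<forall>m\<in>M. \<forall>m'\<in>M. f (m + m') = f m + f m') \<and>
     (\<forall>r\<in>R. \<forall>m\<in>M. f (actM r m) = actN r (f m))"

text \<open>The set Hom_R(M,N) (maps are taken extensional on M, so that function
equality is equality of maps M \<rightarrow> N).\<close>
definition Hom ::
  "'r set \<Rightarrow> 'm::ab_group_add set \<Rightarrow> ('r \<Rightarrow> 'm \<Rightarrow> 'm) \<Rightarrow> 'n::ab_group_add set \<Rightarrow> ('r \<Rightarrow> 'n \<Rightarrow> 'n)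
     \<Rightarrow> ('m \<Rightarrow> 'n) set" where
  "Hom R M actM N actN = {f. lin_map R M actM N actN f \<and> f \<in> extensional M}"

definition freemod :: "'r::zero set \<Rightarrow> nat \<Rightarrow> (nat \<Rightarrow> 'r) set" where
  "freemod R n = {v. (\<forall>i. v i \<in> R) \<and> (\<forall>i\<ge>n. v i = 0)}"

definition fg_projective ::
  "'r::ab_group_add set \<Rightarrow> ('r \<Rightarrow> 'r \<Rightarrow> 'r) \<Rightarrow> 'm::ab_group_add set \<Rightarrow> ('r \<Rightarrow> 'm \<Rightarrow> 'm) \<Rightarrow> bool" where
  "fg_projective R mult M act \<longleftrightarrow>
     (\<exists>n \<iota> \<pi>. lin_map R M act (freemod R n) (\<lambda>r v i. mult r (v i)) \<iota> \<and>
              lin_map R (freemod R n) (\<lambda>r v i. mult r (v i)) M act \<pi> \<and>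
              (\<forall>m\<in>M. \<pi> (\<iota> m) = m))"

text \<open>A k-linear category with object type 'x: hom-modules C x y (all inside one
ambient abelian group 'a), composition m x y z : C x y \<times> C y z \<rightarrow> C x z, units e x.\<close>
definition klin_cat ::
  "('x \<Rightarrow> 'x \<Rightarrow> 'a::ab_group_add set) \<Rightarrow> ('k::comm_ring_1 \<Rightarrow> 'a \<Rightarrow> 'a)
     \<Rightarrow> ('x \<Rightarrow> 'x \<Rightarrow> 'x \<Rightarrow> 'a \<Rightarrow> 'a \<Rightarrow> 'a) \<Rightarrow> ('x \<Rightarrow> 'a) \<Rightarrow> bool" where
  "klin_cat C s m e \<longleftrightarrow>
     (\<forall>x y. kmodule (C x y) s) \<and>
     (\<forall>x y z. \<forall>a\<in>C x y. \<forall>b\<in>C y z. m x y z a b \<in> C x z) \<and>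
     (\<forall>x y z. \<forall>a\<in>C x y. \<forall>a'\<in>C x y. \<forall>b\<in>C y z. m x y z (a + a') b = m x y z a b + m x y z a' b) \<and>
     (\<forall>x y z. \<forall>a\<in>C x y. \<forall>b\<in>C y z. \<forall>b'\<in>C y z. m x y z a (b + b') = m x y z a b + m x y z a b') \<and>
     (\<forall>x y z c. \<forall>a\<in>C x y. \<forall>b\<in>C y z. m x y z (s c a) b = s c (m x y z a b)) \<and>
     (\<forall>x y z c. \<forall>a\<in>C x y. \<forall>b\<in>C y z. m x y z a (s c b) = s c (m x y z a b)) \<and>
     (\<forall>w x y z. \<forall>a\<in>C w x. \<forall>b\<in>C x y. \<forall>c\<in>C y z.
        m w y z (m w x y a b) c = m w x z a (m x y z b c)) \<and>
     (\<forall>x. e x \<in> C x x) \<and>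
     (\<forall>x y. \<forall>a\<in>C x y. m x x y (e x) a = a \<and> m x y y a (e y) = a)"

text \<open>A k-coalgebra (C, Delta, eps); Delta(h) is given by a representing formal sum.\<close>
definition kcoalgebra ::
  "'h::ab_group_add set \<Rightarrow> ('k::comm_ring_1 \<Rightarrow> 'h \<Rightarrow> 'h) \<Rightarrow> ('h \<Rightarrow> ('h \<times> 'h) list) \<Rightarrow> ('h \<Rightarrow> 'k)
     \<Rightarrow> bool" where
  "kcoalgebra C s Delta eps \<longleftrightarrow>
     kmodule C s \<and>
     (\<forall>h\<in>C. set (Delta h) \<subseteq> C \<times> C) \<and>
     (\<forall>h\<in>C. \<forall>h'\<in>C. ktensor_eq C s C s (Delta (h + h')) (Delta h @ Delta h')) \<and>
     (\<forall>c. \<forall>h\<in>C. ktensor_eq C s C s (Delta (s c h)) (map (\<lambda>(h1, h2). (s c h1, h2)) (Delta h))) \<and>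
     (\<forall>h\<in>C. \<forall>h'\<in>C. eps (h + h') = eps h + eps h') \<and>
     (\<forall>c. \<forall>h\<in>C. eps (s c h) = c * eps h) \<and>
     (\<forall>h\<in>C. ktensor3_eq C s C s C s
        (concat (map (\<lambda>(h1, h2). map (\<lambda>(u, v). (u, v, h2)) (Delta h1)) (Delta h)))
        (concat (map (\<lambda>(h1, h2). map (\<lambda>(u, v). (h1, u, v)) (Delta h2)) (Delta h)))) \<and>
     (\<forall>h\<in>C. sum_list (map (\<lambda>(h1, h2). s (eps h1) h2) (Delta h)) = h) \<and>
     (\<forall>h\<in>C. sum_list (map (\<lambda>(h1, h2). s (eps h2) h1) (Delta h)) = h)"

definition semi_hopf_cat ::
  "('x \<Rightarrow> 'x \<Rightarrow> 'h::ab_group_add set) \<Rightarrow> ('k::comm_ring_1 \<Rightarrow> 'h \<Rightarrow> 'h)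
     \<Rightarrow> ('x \<Rightarrow> 'x \<Rightarrow> 'x \<Rightarrow> 'h \<Rightarrow> 'h \<Rightarrow> 'h) \<Rightarrow> ('x \<Rightarrow> 'h)
     \<Rightarrow> ('x \<Rightarrow> 'x \<Rightarrow> 'h \<Rightarrow> ('h \<times> 'h) list) \<Rightarrow> ('x \<Rightarrow> 'x \<Rightarrow> 'h \<Rightarrow> 'k) \<Rightarrow> bool" where
  "semi_hopf_cat Hc sH mH eH Delta eps \<longleftrightarrow>
     klin_cat Hc sH mH eH \<and>
     (\<forall>x y. kcoalgebra (Hc x y) sH (Delta x y) (eps x y)) \<and>
     (\<forall>x y z. \<forall>h\<in>Hc x y. \<forall>h'\<in>Hc y z.
        ktensor_eq (Hc x z) sH (Hc x z) sH (Delta x z (mH x y z h h'))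
          (concat (map (\<lambda>(h1, h2). map (\<lambda>(h1', h2'). (mH x y z h1 h1', mH x y z h2 h2'))
                          (Delta y z h')) (Delta x y h)))) \<and>
     (\<forall>x. ktensor_eq (Hc x x) sH (Hc x x) sH (Delta x x (eH x)) [(eH x, eH x)]) \<and>
     (\<forall>x y z. \<forall>h\<in>Hc x y. \<forall>h'\<in>Hc y z. eps x z (mH x y z h h') = eps x y h * eps y z h') \<and>
     (\<forall>x. eps x x (eH x) = 1)"

text \<open>A right H-comodule category A (same objects 'x), rho x y a representing a_[0] \<otimes> a_[1].\<close>
definition comodule_cat ::
  "('x \<Rightarrow> 'x \<Rightarrow> 'h::ab_group_add set) \<Rightarrow> ('k::comm_ring_1 \<Rightarrow> 'h \<Rightarrow> 'h)
     \<Rightarrow> ('x \<Rightarrow> 'x \<Rightarrow> 'x \<Rightarrow> 'h \<Rightarrow> 'h \<Rightarrow> 'h) \<Rightarrow> ('x \<Rightarrow> 'h)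
     \<Rightarrow> ('x \<Rightarrow> 'x \<Rightarrow> 'h \<Rightarrow> ('h \<times> 'h) list) \<Rightarrow> ('x \<Rightarrow> 'x \<Rightarrow> 'h \<Rightarrow> 'k)
     \<Rightarrow> ('x \<Rightarrow> 'x \<Rightarrow> 'a::ab_group_add set) \<Rightarrow> ('k \<Rightarrow> 'a \<Rightarrow> 'a)
     \<Rightarrow> ('x \<Rightarrow> 'x \<Rightarrow> 'x \<Rightarrow> 'a \<Rightarrow> 'a \<Rightarrow> 'a) \<Rightarrow> ('x \<Rightarrow> 'a)
     \<Rightarrow> ('x \<Rightarrow> 'x \<Rightarrow> 'a \<Rightarrow> ('a \<times> 'h) list) \<Rightarrow> bool" where
  "comodule_cat Hc sH mH eH Delta eps Ac sA mA eA rho \<longleftrightarrow>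
     klin_cat Ac sA mA eA \<and>
     (\<forall>x y. \<forall>a\<in>Ac x y. set (rho x y a) \<subseteq> Ac x y \<times> Hc x y) \<and>
     (\<forall>x y. \<forall>a\<in>Ac x y. \<forall>a'\<in>Ac x y.
        ktensor_eq (Ac x y) sA (Hc x y) sH (rho x y (a + a')) (rho x y a @ rho x y a')) \<and>
     (\<forall>x y c. \<forall>a\<in>Ac x y.
        ktensor_eq (Ac x y) sA (Hc x y) sH (rho x y (sA c a))
          (map (\<lambda>(a0, h). (sA c a0, h)) (rho x y a))) \<and>
     (\<forall>x y. \<forall>a\<in>Ac x y. ktensor3_eq (Ac x y) sA (Hc x y) sH (Hc x y) sH
        (concat (map (\<lambda>(a0, h). map (\<lambda>(u, v). (u, v, h)) (rho x y a0)) (rho x y a)))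
        (concat (map (\<lambda>(a0, h). map (\<lambda>(u, v). (a0, u, v)) (Delta x y h)) (rho x y a)))) \<and>
     (\<forall>x y. \<forall>a\<in>Ac x y. sum_list (map (\<lambda>(a0, h). sA (eps x y h) a0) (rho x y a)) = a) \<and>
     (\<forall>x y z. \<forall>a\<in>Ac x y. \<forall>b\<in>Ac y z.
        ktensor_eq (Ac x z) sA (Hc x z) sH (rho x z (mA x y z a b))
          (concat (map (\<lambda>(a0, a1). map (\<lambda>(b0, b1). (mA x y z a0 b0, mH x y z a1 b1))
                          (rho y z b)) (rho x y a)))) \<and>
     (\<forall>x. ktensor_eq (Ac x x) sA (Hc x x) sH (rho x x (eA x)) [(eA x, eH x)])"

definition coinv ::
  "('x \<Rightarrow> 'x \<Rightarrow> 'h::ab_group_add set) \<Rightarrow> ('k \<Rightarrow> 'h \<Rightarrow> 'h) \<Rightarrow> ('x \<Rightarrow> 'h)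
     \<Rightarrow> ('x \<Rightarrow> 'x \<Rightarrow> 'a::ab_group_add set) \<Rightarrow> ('k \<Rightarrow> 'a \<Rightarrow> 'a)
     \<Rightarrow> ('x \<Rightarrow> 'x \<Rightarrow> 'a \<Rightarrow> ('a \<times> 'h) list) \<Rightarrow> 'x \<Rightarrow> 'a set" where
  "coinv Hc sH eH Ac sA rho x =
     {a \<in> Ac x x. ktensor_eq (Ac x x) sA (Hc x x) sH (rho x x a) [(a, eH x)]}"

definition can_map ::
  "('x \<Rightarrow> 'x \<Rightarrow> 'x \<Rightarrow> 'a \<Rightarrow> 'a \<Rightarrow> 'a) \<Rightarrow> ('x \<Rightarrow> 'x \<Rightarrow> 'a \<Rightarrow> ('a \<times> 'h) list)
     \<Rightarrow> 'x \<Rightarrow> 'x \<Rightarrow> 'x \<Rightarrow> ('a \<times> 'a) list \<Rightarrow> ('a \<times> 'h) list" where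
  "can_map mA rho z x y xs =
     concat (map (\<lambda>(a, a'). map (\<lambda>(a0, h). (mA z x y a a0, h)) (rho x y a')) xs)"

text \<open>A is an H-Galois category extension of B: every can^z_{xy} from
A_{zx} \<otimes>_{B_x} A_{xy} to A_{zy} \<otimes> H_{xy} is a (well-defined) bijection.\<close>
definition galois_cat_ext ::
  "('x \<Rightarrow> 'x \<Rightarrow> 'h::ab_group_add set) \<Rightarrow> ('k \<Rightarrow> 'h \<Rightarrow> 'h) \<Rightarrow> ('x \<Rightarrow> 'h)
     \<Rightarrow> ('x \<Rightarrow> 'x \<Rightarrow> 'a::ab_group_add set) \<Rightarrow> ('k \<Rightarrow> 'a \<Rightarrow> 'a)
     \<Rightarrow> ('x \<Rightarrow> 'x \<Rightarrow> 'x \<Rightarrow> 'a \<Rightarrow> 'a \<Rightarrow> 'a) \<Rightarrow> ('x \<Rightarrow> 'x \<Rightarrow> 'a \<Rightarrow> ('a \<times> 'h) list) \<Rightarrow> bool" where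
  "galois_cat_ext Hc sH eH Ac sA mA rho \<longleftrightarrow>
     (\<forall>x y z.
        (\<forall>xs ys. set xs \<subseteq> Ac z x \<times> Ac x y \<longrightarrow> set ys \<subseteq> Ac z x \<times> Ac x y \<longrightarrow>
           (tensor_eq (Ac z x) (Ac x y) (coinv Hc sH eH Ac sA rho x)
               (\<lambda>a b. mA z x x a b) (\<lambda>b a'. mA x x y b a') xs ys
            \<longleftrightarrow> ktensor_eq (Ac z y) sA (Hc x y) sH (can_map mA rho z x y xs) (can_map mA rho z x y ys))) \<and>
        (\<forall>zs. set zs \<subseteq> Ac z y \<times> Hc x y \<longrightarrow>
           (\<exists>xs. set xs \<subseteq> Ac z x \<times> Ac x y \<and>
                 ktensor_eq (Ac z y) sA (Hc x y) sH (can_map mA rho z x y xs) zs)))"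

text \<open>The maps delta: g \<mapsto> (a \<mapsto> a_[0] g(a_[1])), made extensional on A_{xy};
target objects u v: delta^x_{uv} applies to g : H_{xy} \<rightarrow> A_{yv}.\<close>
definition delta_map ::
  "('x \<Rightarrow> 'x \<Rightarrow> 'a set) \<Rightarrow> ('x \<Rightarrow> 'x \<Rightarrow> 'x \<Rightarrow> 'a \<Rightarrow> 'a \<Rightarrow> 'a) \<Rightarrow> ('x \<Rightarrow> 'x \<Rightarrow> 'a \<Rightarrow> ('a \<times> 'h) list)
     \<Rightarrow> 'x \<Rightarrow> 'x \<Rightarrow> 'x \<Rightarrow> ('h \<Rightarrow> 'a) \<Rightarrow> 'a \<Rightarrow> 'a::monoid_add" where
  "delta_map Ac mA rho x y v g =
     restrict (\<lambda>a. sum_list (map (\<lambda>(a0, h). mA x y v a0 (g h)) (rho x y a))) (Ac x y)"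

end

theory Submission
  imports Defs "HOL-Library.Multiset"
begin

text \<open>Fix objects \<open>x, y\<close> and write \<open>\<rho>(a) = a\<^sub>0 \<otimes> a\<^sub>1\<close>. Projectivity gives dual bases
  \<open>(f i, hb i)\<close> of \<open>H\<^sub>x\<^sub>y\<close> over \<open>k\<close> and \<open>(phi j, e j)\<close> of \<open>A\<^sub>x\<^sub>y\<close> over \<open>B\<^sub>x\<close>, and
  surjectivity of \<open>\<delta>\<^sup>x\<^sub>x\<^sub>y\<close> gives \<open>g j : H\<^sub>x\<^sub>y \<rightarrow> A\<^sub>y\<^sub>x\<close> with \<open>a\<^sub>0 g j (a\<^sub>1) = phi j a\<close>.
  The map \<open>a \<otimes> h \<mapsto> \<Sum>j a g j (h) \<otimes> e j\<close> inverts \<open>can\<^sup>z\<^sub>x\<^sub>y\<close>: after \<open>can\<close> it sends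
  \<open>a \<otimes> a'\<close> to \<open>\<Sum>j a phi j (a') \<otimes> e j = a \<otimes> a'\<close>; before \<open>can\<close>, the \<open>hb i\<close>-coefficient of
  the image of \<open>a \<otimes> h\<close> is \<open>a \<Sum>j g j (h) coord i (e j)\<close> with \<open>coord i a = f i (a\<^sub>1) a\<^sub>0\<close>,
  and injectivity of \<open>\<delta>\<^sup>x\<^sub>y\<^sub>y\<close> turns this into \<open>f i (h) a\<close>.
  Tensor products are formal sums modulo the defining relations, so every map out of one is
  checked on the generating relations.\<close>

lemma sum_list_closed:
  assumes "0 \<in> M" "\<And>a b. a \<in> M \<Longrightarrow> b \<in> M \<Longrightarrow> a + b \<in> M" "set ms \<subseteq> M"
  shows "sum_list ms \<in> M"
  using assms(3) by (induction ms) (auto simp: assms(1,2))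

lemma mset_concat_map_swap:
  "mset (concat (map (\<lambda>p. map (\<lambda>j. F p j) J) P)) = mset (concat (map (\<lambda>j. map (\<lambda>p. F p j) P) J))"
proof (induction P)
  case Nil then show ?case by (induction J) auto
next
  case (Cons a P)
  have "mset (concat (map (\<lambda>j. map (\<lambda>p. F p j) (a # P)) J)) =
        mset (map (\<lambda>j. F a j) J) + mset (concat (map (\<lambda>j. map (\<lambda>p. F p j) P) J))"
    by (induction J) (auto simp: ac_simps)
  then show ?case using Cons by simp
qed

lemma concat_map_concat: "concat (map f (concat (map g L))) = concat (map (\<lambda>x. concat (map f (g x))) L)"
  by (induction L) auto

lemma sum_list_map_concat:
  "sum_list (map F (concat (map G L))) = sum_list (map (\<lambda>x. sum_list (map F (G x))) L)"
  by (induction L) auto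

lemma sum_list_map_swap:
  fixes F :: "'p \<Rightarrow> 'j \<Rightarrow> 'g::comm_monoid_add"
  shows "sum_list (map (\<lambda>p. sum_list (map (\<lambda>j. F p j) J)) P) = sum_list (map (\<lambda>j. sum_list (map (\<lambda>p. F p j) P)) J)"
  by (induction P) (simp_all add: sum_list_addf)

lemma sum_map_cong:
  "(\<And>a0 h. (a0, h) \<in> set L \<Longrightarrow> F a0 h = G a0 h) \<Longrightarrow>
   sum_list (map (\<lambda>(a0, h). F a0 h) L) = sum_list (map (\<lambda>(a0, h). G a0 h) L)"
  by (rule arg_cong[where f = sum_list], rule map_cong) auto

section \<open>Formal sums and the subgroup of relations\<close>

lemma fcount_append: "fcount (xs @ ys) = fcount xs + fcount ys"
  by (auto simp: fcount_def fun_eq_iff)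

lemma fcount_single: "fcount [p] = fdelta p"
  by (auto simp: fcount_def fdelta_def fun_eq_iff)

lemma fcount_pair: "fcount [p, q] = fdelta p + fdelta q"
  by (auto simp: fcount_def fdelta_def fun_eq_iff)

lemma fcount_concat: "fcount (concat (map f xs)) = sum_list (map (\<lambda>x. fcount (f x)) xs)"
  by (induction xs) (auto simp: fcount_append fcount_def fun_eq_iff)

lemma fcount_eq_iff_mset_eq: "fcount xs = fcount ys \<longleftrightarrow> mset xs = mset ys"
  by (auto simp: fcount_def fun_eq_iff count_mset multiset_eq_iff)

lemma zspan_base: "f \<in> S \<Longrightarrow> f \<in> zspan S"
  using zspan.zspan_add[OF _ zspan.zspan_zero, of f S] by simp

lemma zspan_add_closed: "h \<in> zspan S \<Longrightarrow> g \<in> zspan S \<Longrightarrow> (\<lambda>q. g q + h q) \<in> zspan S"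
proof (induction h rule: zspan.induct)
  case zspan_zero then show ?case by simp
next
  case (zspan_add f h)
  have "(\<lambda>q. g q + (h q + f q)) = (\<lambda>q. (g q + h q) + f q)" by (simp add: algebra_simps)
  then show ?case using zspan.zspan_add[OF zspan_add(1) zspan_add(3)[OF zspan_add(4)]] by simp
next
  case (zspan_diff f h)
  have "(\<lambda>q. g q + (h q - f q)) = (\<lambda>q. (g q + h q) - f q)" by (simp add: algebra_simps)
  then show ?case using zspan.zspan_diff[OF zspan_diff(1) zspan_diff(3)[OF zspan_diff(4)]] by simp
qed

lemma zspan_uminus_closed: "h \<in> zspan S \<Longrightarrow> (\<lambda>q. - h q) \<in> zspan S"
proof (induction h rule: zspan.induct)
  case zspan_zero then show ?case by (simp add: zspan.zspan_zero)
next
  case (zspan_add f h)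
  have "(\<lambda>q. - (h q + f q)) = (\<lambda>q. (- h q) - f q)" by (simp add: fun_eq_iff)
  then show ?case using zspan.zspan_diff[OF zspan_add(1) zspan_add(3)] by simp
next
  case (zspan_diff f h)
  have "(\<lambda>q. - (h q - f q)) = (\<lambda>q. (- h q) + f q)" by (simp add: fun_eq_iff)
  then show ?case using zspan.zspan_add[OF zspan_diff(1) zspan_diff(3)] by simp
qed

lemma zspan_diff_closed: "g \<in> zspan S \<Longrightarrow> h \<in> zspan S \<Longrightarrow> (\<lambda>q. g q - h q) \<in> zspan S"
  using zspan_add_closed[OF zspan_uminus_closed[of h S], of g] by simp

text \<open>Lists encode elements of the free abelian group via \<open>fcount\<close>; \<open>F\<close> is extended
  additively, and it maps \<open>zspan S\<close> into \<open>Z\<close> once it maps the generators there.\<close>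

lemma zspan_sum_list_diff_in_subgroup:
  fixes F :: "'b \<Rightarrow> 'g::ab_group_add"
  assumes d: "d \<in> zspan S" "d = (\<lambda>q. fcount L q - fcount L' q)"
    and gens: "\<And>f. f \<in> S \<Longrightarrow> \<exists>R1 R2. f = (\<lambda>q. fcount R1 q - fcount R2 q) \<and>
                  sum_list (map F R1) - sum_list (map F R2) \<in> Z"
    and Z0: "0 \<in> Z" and Z_add: "\<And>a b. a \<in> Z \<Longrightarrow> b \<in> Z \<Longrightarrow> a + b \<in> Z"
    and Z_diff: "\<And>a b. a \<in> Z \<Longrightarrow> b \<in> Z \<Longrightarrow> a - b \<in> Z"
  shows "sum_list (map F L) - sum_list (map F L') \<in> Z"
  using d
proof (induction d arbitrary: L L' rule: zspan.induct)
  case zspan_zero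
  then have "mset L = mset L'"
    by (auto simp: fun_eq_iff simp flip: fcount_eq_iff_mset_eq)
  then have "sum_list (map F L) = sum_list (map F L')"
    by (metis mset_map sum_mset_sum_list)
  then show ?case using Z0 by simp
next
  case (zspan_add f g)
  obtain R1 R2 where R: "f = (\<lambda>q. fcount R1 q - fcount R2 q)"
    "sum_list (map F R1) - sum_list (map F R2) \<in> Z" using gens zspan_add(1) by blast
  have "g = (\<lambda>q. fcount (L @ R2) q - fcount (L' @ R1) q)"
    using zspan_add(4) R(1) by (auto simp: fun_eq_iff fcount_append algebra_simps dest!: fun_cong)
  then have "sum_list (map F (L @ R2)) - sum_list (map F (L' @ R1)) \<in> Z"
    by (rule zspan_add(3))
  from Z_add[OF this R(2)] show ?case by (simp add: algebra_simps)
next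
  case (zspan_diff f g)
  obtain R1 R2 where R: "f = (\<lambda>q. fcount R1 q - fcount R2 q)"
    "sum_list (map F R1) - sum_list (map F R2) \<in> Z" using gens zspan_diff(1) by blast
  have "g = (\<lambda>q. fcount (L @ R1) q - fcount (L' @ R2) q)"
    using zspan_diff(4) R(1) by (auto simp: fun_eq_iff fcount_append algebra_simps dest!: fun_cong)
  then have "sum_list (map F (L @ R1)) - sum_list (map F (L' @ R2)) \<in> Z"
    by (rule zspan_diff(3))
  from Z_diff[OF this R(2)] show ?case by (simp add: algebra_simps)
qed

section \<open>Calculus of formal tensors\<close>

lemma tensor_rels_as_fcount_diff:
  assumes "\<And>m m' n. m \<in> M \<Longrightarrow> m' \<in> M \<Longrightarrow> n \<in> N \<Longrightarrow> Q [(m + m', n)] [(m, n), (m', n)]"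
    and "\<And>m n n'. m \<in> M \<Longrightarrow> n \<in> N \<Longrightarrow> n' \<in> N \<Longrightarrow> Q [(m, n + n')] [(m, n), (m, n')]"
    and "\<And>m r n. m \<in> M \<Longrightarrow> r \<in> R \<Longrightarrow> n \<in> N \<Longrightarrow> Q [(ract m r, n)] [(m, lact r n)]"
    and "f \<in> tensor_rels M N R ract lact"
  shows "\<exists>R1 R2. f = (\<lambda>q. fcount R1 q - fcount R2 q) \<and> Q R1 R2"
  using assms(4) unfolding tensor_rels_def
proof (elim UnE CollectE exE conjE)
  fix m m' n assume "m \<in> M" "m' \<in> M" "n \<in> N"
    and "f = (\<lambda>q. fdelta (m + m', n) q - fdelta (m, n) q - fdelta (m', n) q)"
  with assms(1) show ?thesis
    by (intro exI[of _ "[(m + m', n)]"] exI[of _ "[(m, n), (m', n)]"])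
       (simp add: fcount_single fcount_pair fun_eq_iff)
next
  fix m n n' assume "m \<in> M" "n \<in> N" "n' \<in> N"
    and "f = (\<lambda>q. fdelta (m, n + n') q - fdelta (m, n) q - fdelta (m, n') q)"
  with assms(2) show ?thesis
    by (intro exI[of _ "[(m, n + n')]"] exI[of _ "[(m, n), (m, n')]"])
       (simp add: fcount_single fcount_pair fun_eq_iff)
next
  fix m r n assume "m \<in> M" "r \<in> R" "n \<in> N"
    and "f = (\<lambda>q. fdelta (ract m r, n) q - fdelta (m, lact r n) q)"
  with assms(3) show ?thesis
    by (intro exI[of _ "[(ract m r, n)]"] exI[of _ "[(m, lact r n)]"])
       (simp add: fcount_single fun_eq_iff)
qed

lemma tensor_eq_sets: "tensor_eq M N R ract lact xs ys \<Longrightarrow> set xs \<subseteq> M \<times> N \<and> set ys \<subseteq> M \<times> N"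
  by (simp add: tensor_eq_def)

lemma tensor_eq_refl: "set xs \<subseteq> M \<times> N \<Longrightarrow> tensor_eq M N R ract lact xs xs"
  unfolding tensor_eq_def using zspan.zspan_zero by simp

lemma tensor_eq_sym: "tensor_eq M N R ract lact xs ys \<Longrightarrow> tensor_eq M N R ract lact ys xs"
  unfolding tensor_eq_def using zspan_uminus_closed by fastforce

lemma tensor_eq_trans [trans]:
  "tensor_eq M N R ract lact xs ys \<Longrightarrow> tensor_eq M N R ract lact ys zs \<Longrightarrow> tensor_eq M N R ract lact xs zs"
  unfolding tensor_eq_def using zspan_add_closed by fastforce

lemma ktensor_eq_trans [trans]:
  "ktensor_eq M sM N sN xs ys \<Longrightarrow> ktensor_eq M sM N sN ys zs \<Longrightarrow> ktensor_eq M sM N sN xs zs"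
  unfolding ktensor_eq_def by (rule tensor_eq_trans)

lemma tensor_eq_append:
  "tensor_eq M N R ract lact xs ys \<Longrightarrow> tensor_eq M N R ract lact xs' ys'
   \<Longrightarrow> tensor_eq M N R ract lact (xs @ xs') (ys @ ys')"
  unfolding tensor_eq_def
  using zspan_add_closed[of "\<lambda>q. fcount xs' q - fcount ys' q" _ "\<lambda>q. fcount xs q - fcount ys q"]
  by (simp add: fcount_append algebra_simps)

lemma tensor_eq_mset:
  assumes "mset xs = mset ys" "set xs \<subseteq> M \<times> N"
  shows "tensor_eq M N R ract lact xs ys"
proof -
  have "fcount xs = fcount ys" using assms(1) by (simp add: fcount_eq_iff_mset_eq)
  moreover have "set ys = set xs" using assms(1) by (metis set_mset_mset)
  ultimately show ?thesis
    unfolding tensor_eq_def using assms(2) zspan.zspan_zero by simp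
qed

lemma tensor_eq_Nil_if_double:
  assumes "tensor_eq M N R ract lact xs (xs @ xs)"
  shows "tensor_eq M N R ract lact xs []"
proof -
  have "(\<lambda>q. - (fcount xs q - fcount (xs @ xs) q)) = (\<lambda>q. fcount xs q - fcount [] q)"
    by (simp add: fcount_def fun_eq_iff)
  then show ?thesis
    using assms zspan_uminus_closed[of "\<lambda>q. fcount xs q - fcount (xs @ xs) q"]
    by (simp add: tensor_eq_def)
qed

lemma tensor_eq_concat_map_cong:
  assumes "\<And>p. p \<in> set I \<Longrightarrow> tensor_eq M N R ract lact (f p) (g p)"
  shows "tensor_eq M N R ract lact (concat (map f I)) (concat (map g I))"
  using assms by (induction I) (auto simp: tensor_eq_refl tensor_eq_append)

lemma tensor_eq_map_cong:
  assumes "\<And>p. p \<in> set xs \<Longrightarrow> tensor_eq M N R ract lact [f p] [g p]"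
  shows "tensor_eq M N R ract lact (map f xs) (map g xs)"
proof -
  have "tensor_eq M N R ract lact (concat (map (\<lambda>p. [f p]) xs)) (concat (map (\<lambda>p. [g p]) xs))"
    using assms by (rule tensor_eq_concat_map_cong)
  then show ?thesis by simp
qed

lemma tensor_eq_map_split:
  assumes "\<And>p. p \<in> set xs \<Longrightarrow> tensor_eq M N R ract lact [f p] [u p, v p]"
  shows "tensor_eq M N R ract lact (map f xs) (map u xs @ map v xs)"
proof -
  have "tensor_eq M N R ract lact (concat (map (\<lambda>p. [f p]) xs)) (concat (map (\<lambda>p. [u p, v p]) xs))"
    using assms by (rule tensor_eq_concat_map_cong)
  then have 1: "tensor_eq M N R ract lact (map f xs) (concat (map (\<lambda>p. [u p, v p]) xs))"
    by simp
  have "mset (concat (map (\<lambda>p. [u p, v p]) xs)) = mset (map u xs @ map v xs)"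
    by (induction xs) auto
  then show ?thesis
    using tensor_eq_sets[OF 1] by (intro tensor_eq_trans[OF 1] tensor_eq_mset) auto
qed

lemma tensor_eq_add_left:
  "m \<in> M \<Longrightarrow> m' \<in> M \<Longrightarrow> n \<in> N \<Longrightarrow> m + m' \<in> M \<Longrightarrow>
   tensor_eq M N R ract lact [(m + m', n)] [(m, n), (m', n)]"
  unfolding tensor_eq_def
  by (simp add: fcount_single fcount_pair, rule zspan_base) (auto simp: tensor_rels_def algebra_simps)

lemma tensor_eq_add_right:
  "m \<in> M \<Longrightarrow> n \<in> N \<Longrightarrow> n' \<in> N \<Longrightarrow> n + n' \<in> N \<Longrightarrow>
   tensor_eq M N R ract lact [(m, n + n')] [(m, n), (m, n')]"
  unfolding tensor_eq_def
  by (simp add: fcount_single fcount_pair, rule zspan_base) (auto simp: tensor_rels_def algebra_simps)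

lemma tensor_eq_balanced:
  "m \<in> M \<Longrightarrow> r \<in> R \<Longrightarrow> n \<in> N \<Longrightarrow> ract m r \<in> M \<Longrightarrow> lact r n \<in> N \<Longrightarrow>
   tensor_eq M N R ract lact [(ract m r, n)] [(m, lact r n)]"
  unfolding tensor_eq_def
  by (simp add: fcount_single, rule zspan_base) (auto simp: tensor_rels_def)

lemma tensor_eq_zero_left: "0 \<in> M \<Longrightarrow> n \<in> N \<Longrightarrow> tensor_eq M N R ract lact [(0, n)] []"
  using tensor_eq_add_left[of 0 M 0 n N R ract lact] by (intro tensor_eq_Nil_if_double) simp

lemma tensor_eq_zero_right: "0 \<in> N \<Longrightarrow> m \<in> M \<Longrightarrow> tensor_eq M N R ract lact [(m, 0)] []"
  using tensor_eq_add_right[of m M 0 N 0 R ract lact] by (intro tensor_eq_Nil_if_double) simp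

lemma tensor_eq_sum_list_left:
  assumes M0: "0 \<in> M" and M_add: "\<And>a b. a \<in> M \<Longrightarrow> b \<in> M \<Longrightarrow> a + b \<in> M" and n: "n \<in> N" and ms: "set ms \<subseteq> M"
  shows "tensor_eq M N R ract lact [(sum_list ms, n)] (map (\<lambda>m. (m, n)) ms)"
  using ms
proof (induction ms)
  case Nil then show ?case using tensor_eq_zero_left[OF M0 n] by simp
next
  case (Cons m ms)
  have "sum_list ms \<in> M" using sum_list_closed[OF M0 M_add] Cons.prems by auto
  then have "tensor_eq M N R ract lact [(m + sum_list ms, n)] [(m, n), (sum_list ms, n)]"
    using Cons.prems n M_add by (intro tensor_eq_add_left) auto
  moreover have "tensor_eq M N R ract lact ([(m, n)] @ [(sum_list ms, n)]) ([(m, n)] @ map (\<lambda>m. (m, n)) ms)"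
    using Cons n by (intro tensor_eq_append tensor_eq_refl) auto
  ultimately show ?case by (auto intro: tensor_eq_trans)
qed

lemma tensor_eq_sum_list_right:
  assumes N0: "0 \<in> N" and N_add: "\<And>a b. a \<in> N \<Longrightarrow> b \<in> N \<Longrightarrow> a + b \<in> N" and m: "m \<in> M" and ns: "set ns \<subseteq> N"
  shows "tensor_eq M N R ract lact [(m, sum_list ns)] (map (\<lambda>n. (m, n)) ns)"
  using ns
proof (induction ns)
  case Nil then show ?case using tensor_eq_zero_right[OF N0 m] by simp
next
  case (Cons n ns)
  have "sum_list ns \<in> N" using sum_list_closed[OF N0 N_add] Cons.prems by auto
  then have "tensor_eq M N R ract lact [(m, n + sum_list ns)] [(m, n), (m, sum_list ns)]"
    using Cons.prems m N_add by (intro tensor_eq_add_right) auto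
  moreover have "tensor_eq M N R ract lact ([(m, n)] @ [(m, sum_list ns)]) ([(m, n)] @ map (\<lambda>n. (m, n)) ns)"
    using Cons m by (intro tensor_eq_append tensor_eq_refl) auto
  ultimately show ?case by (auto intro: tensor_eq_trans)
qed

lemma tensor_eq_induced_sum:
  fixes F :: "'m::ab_group_add \<times> 'n::ab_group_add \<Rightarrow> 'g::ab_group_add"
  assumes T: "tensor_eq M N R ract lact L L'"
    and "\<And>m m' n. m \<in> M \<Longrightarrow> m' \<in> M \<Longrightarrow> n \<in> N \<Longrightarrow> F (m + m', n) = F (m, n) + F (m', n)"
    and "\<And>m n n'. m \<in> M \<Longrightarrow> n \<in> N \<Longrightarrow> n' \<in> N \<Longrightarrow> F (m, n + n') = F (m, n) + F (m, n')"
    and "\<And>m r n. m \<in> M \<Longrightarrow> r \<in> R \<Longrightarrow> n \<in> N \<Longrightarrow> F (ract m r, n) = F (m, lact r n)"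
  shows "sum_list (map F L) = sum_list (map F L')"
proof -
  have "sum_list (map F L) - sum_list (map F L') \<in> {0}"
  proof (rule zspan_sum_list_diff_in_subgroup[OF _ refl])
    show "(\<lambda>q. fcount L q - fcount L' q) \<in> zspan (tensor_rels M N R ract lact)"
      using T by (simp add: tensor_eq_def)
    fix f assume "f \<in> tensor_rels M N R ract lact"
    then show "\<exists>R1 R2. f = (\<lambda>q. fcount R1 q - fcount R2 q) \<and>
        sum_list (map F R1) - sum_list (map F R2) \<in> {0}"
      by (rule tensor_rels_as_fcount_diff[rotated 3]) (simp_all add: assms(2-4))
  qed simp_all
  then show ?thesis by simp
qed

lemma tensor_eq_induced_map:
  fixes Phi :: "'m::ab_group_add \<times> 'n::ab_group_add \<Rightarrow> ('m2::ab_group_add \<times> 'n2::ab_group_add) list"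
  assumes T: "tensor_eq M N R ract lact L L'"
    and S: "\<And>p. p \<in> M \<times> N \<Longrightarrow> set (Phi p) \<subseteq> M2 \<times> N2"
    and "\<And>m m' n. m \<in> M \<Longrightarrow> m' \<in> M \<Longrightarrow> n \<in> N \<Longrightarrow>
       tensor_eq M2 N2 R2 ract2 lact2 (Phi (m + m', n)) (Phi (m, n) @ Phi (m', n))"
    and "\<And>m n n'. m \<in> M \<Longrightarrow> n \<in> N \<Longrightarrow> n' \<in> N \<Longrightarrow>
       tensor_eq M2 N2 R2 ract2 lact2 (Phi (m, n + n')) (Phi (m, n) @ Phi (m, n'))"
    and "\<And>m r n. m \<in> M \<Longrightarrow> r \<in> R \<Longrightarrow> n \<in> N \<Longrightarrow>
       tensor_eq M2 N2 R2 ract2 lact2 (Phi (ract m r, n)) (Phi (m, lact r n))"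
  shows "tensor_eq M2 N2 R2 ract2 lact2 (concat (map Phi L)) (concat (map Phi L'))"
proof -
  define Z where "Z = zspan (tensor_rels M2 N2 R2 ract2 lact2)"
  have rel: "sum_list (map (fcount \<circ> Phi) X) - sum_list (map (fcount \<circ> Phi) Y) \<in> Z"
    if "tensor_eq M2 N2 R2 ract2 lact2 (concat (map Phi X)) (concat (map Phi Y))" for X Y
    using that by (simp add: tensor_eq_def Z_def fun_diff_def fcount_concat o_def)
  have "sum_list (map (fcount \<circ> Phi) L) - sum_list (map (fcount \<circ> Phi) L') \<in> Z"
  proof (rule zspan_sum_list_diff_in_subgroup[OF _ refl])
    show "(\<lambda>q. fcount L q - fcount L' q) \<in> zspan (tensor_rels M N R ract lact)"
      using T by (simp add: tensor_eq_def)
    fix f assume "f \<in> tensor_rels M N R ract lact"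
    then show "\<exists>R1 R2. f = (\<lambda>q. fcount R1 q - fcount R2 q) \<and>
        sum_list (map (fcount \<circ> Phi) R1) - sum_list (map (fcount \<circ> Phi) R2) \<in> Z"
      by (rule tensor_rels_as_fcount_diff[rotated 3]) (rule rel, simp add: assms(3-5))+
  next
    show "0 \<in> Z" using zspan.zspan_zero by (simp add: Z_def zero_fun_def)
  qed (use zspan_add_closed zspan_diff_closed in \<open>auto simp: Z_def plus_fun_def fun_diff_def\<close>)
  then have "(\<lambda>q. fcount (concat (map Phi L)) q - fcount (concat (map Phi L')) q) \<in> Z"
    by (simp add: fcount_concat fun_diff_def o_def)
  moreover have "set (concat (map Phi L)) \<subseteq> M2 \<times> N2" "set (concat (map Phi L')) \<subseteq> M2 \<times> N2"
    using T S unfolding tensor_eq_def by fastforce+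
  ultimately show ?thesis unfolding tensor_eq_def Z_def by simp
qed

section \<open>Dual bases\<close>

lemma freemod_linear_expansion:
  assumes pi: "lin_map R (freemod R n) (\<lambda>r v i. mul r (v i)) M act pi"
    and R0: "0 \<in> R" and u: "u \<in> R" and unit: "\<And>r. r \<in> R \<Longrightarrow> mul r u = r"
    and mul_zero: "\<And>r. r \<in> R \<Longrightarrow> mul r 0 = 0"
    and v: "v \<in> freemod R n"
  shows "pi v = sum_list (map (\<lambda>j. act (v j) (pi (\<lambda>l. if l = j then u else 0))) [0..<n])"
proof -
  define trunc where "trunc k = (\<lambda>l. if l < k then v l else 0)" for k
  have vR: "v i \<in> R" for i using v by (simp add: freemod_def)
  have v0: "i \<ge> n \<Longrightarrow> v i = 0" for i using v by (simp add: freemod_def)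
  have pi_add: "a \<in> freemod R n \<Longrightarrow> b \<in> freemod R n \<Longrightarrow> pi (a + b) = pi a + pi b" for a b
    using pi by (simp add: lin_map_def)
  have pi_act: "r \<in> R \<Longrightarrow> a \<in> freemod R n \<Longrightarrow> pi (\<lambda>i. mul r (a i)) = act r (pi a)" for r a
    using pi by (simp add: lin_map_def)
  have "0 \<in> freemod R n" using R0 by (simp add: freemod_def)
  then have pi0: "pi 0 = 0" using pi_add by fastforce
  have "pi (trunc k) = sum_list (map (\<lambda>j. act (v j) (pi (\<lambda>l. if l = j then u else 0))) [0..<k])"
    if "k \<le> n" for k
    using that
  proof (induction k)
    case 0
    have "trunc 0 = 0" by (simp add: trunc_def fun_eq_iff)
    then show ?case using pi0 by (simp add: zero_fun_def)
  next
    case (Suc k)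
    define d where "d = (\<lambda>l. if l = k then u else 0)"
    have d: "d \<in> freemod R n" using Suc.prems R0 u by (auto simp: freemod_def d_def)
    have "trunc k \<in> freemod R n" using R0 vR v0 by (auto simp: freemod_def trunc_def)
    moreover have "(\<lambda>i. mul (v k) (d i)) \<in> freemod R n"
      using Suc.prems vR R0 mul_zero unit by (auto simp: freemod_def d_def)
    moreover have "trunc (Suc k) = trunc k + (\<lambda>i. mul (v k) (d i))"
      using vR by (auto simp: trunc_def d_def fun_eq_iff unit mul_zero less_Suc_eq)
    ultimately have "pi (trunc (Suc k)) = pi (trunc k) + act (v k) (pi d)"
      using pi_add pi_act[OF vR d] by simp
    then show ?case using Suc by (simp add: d_def)
  qed
  moreover have "trunc n = v" using v0 by (auto simp: trunc_def fun_eq_iff)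
  ultimately show ?thesis by auto
qed

lemma fg_projective_dual_basis:
  assumes proj: "fg_projective R mul M act"
    and R0: "0 \<in> R" and u: "u \<in> R" and unit: "\<And>r. r \<in> R \<Longrightarrow> mul r u = r"
    and mul_zero: "\<And>r. r \<in> R \<Longrightarrow> mul r 0 = 0"
    and M_add: "\<And>m m'. m \<in> M \<Longrightarrow> m' \<in> M \<Longrightarrow> m + m' \<in> M"
    and M_act: "\<And>r m. r \<in> R \<Longrightarrow> m \<in> M \<Longrightarrow> act r m \<in> M"
  obtains n \<phi> b where "\<And>i. \<phi> i \<in> Hom R M act R mul" and "\<And>i. b i \<in> M"
    and "\<And>m. m \<in> M \<Longrightarrow> m = sum_list (map (\<lambda>i. act (\<phi> i m) (b i)) [0..<n])"
proof -
  obtain n \<iota> \<pi> where \<iota>: "lin_map R M act (freemod R n) (\<lambda>r v i. mul r (v i)) \<iota>"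
    and \<pi>: "lin_map R (freemod R n) (\<lambda>r v i. mul r (v i)) M act \<pi>"
    and retract: "\<And>m. m \<in> M \<Longrightarrow> \<pi> (\<iota> m) = m"
    using proj unfolding fg_projective_def by blast
  define \<phi> where "\<phi> i = restrict (\<lambda>m. \<iota> m i) M" for i
  define b where "b i = \<pi> (\<lambda>l. if l = i \<and> i < n then u else 0)" for i
  have "\<phi> i \<in> Hom R M act R mul" for i
    using \<iota> M_add M_act by (auto simp: Hom_def lin_map_def \<phi>_def freemod_def)
  moreover have "b i \<in> M" for i
    using \<pi> R0 u by (auto simp: b_def lin_map_def freemod_def)
  moreover have "m = sum_list (map (\<lambda>i. act (\<phi> i m) (b i)) [0..<n])" if m: "m \<in> M" for m
  proof -
    have "\<iota> m \<in> freemod R n" using \<iota> m by (simp add: lin_map_def)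
    then have "\<pi> (\<iota> m) = sum_list (map (\<lambda>j. act (\<iota> m j) (\<pi> (\<lambda>l. if l = j then u else 0))) [0..<n])"
      using freemod_linear_expansion[OF \<pi> R0 u unit mul_zero, of "\<iota> m"] by simp
    also have "\<dots> = sum_list (map (\<lambda>i. act (\<phi> i m) (b i)) [0..<n])"
      using m by (intro arg_cong[where f = sum_list] map_cong refl) (simp add: \<phi>_def b_def)
    finally show ?thesis using retract[OF m] by simp
  qed
  ultimately show ?thesis using that by blast
qed

lemma Hom_subset_codomain: "N \<subseteq> N' \<Longrightarrow> Hom R M actM N actN \<subseteq> Hom R M actM N' actN"
  by (auto simp: Hom_def lin_map_def)

lemma ktensor_eq_dual_basis_expansion_single:
  assumes M: "kmodule M sM" and N: "kmodule N sN"
    and b: "\<And>i. b i \<in> N" and h: "h = sum_list (map (\<lambda>i. sN (f i h) (b i)) [0..<n])"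
    and a: "a \<in> M" and "h \<in> N"
  shows "ktensor_eq M sM N sN [(a, h)] (map (\<lambda>i. (sM (f i h) a, b i)) [0..<n])"
proof -
  let ?T = "tensor_eq M N UNIV (\<lambda>m c. sM c m) sN"
  have "?T [(a, sum_list (map (\<lambda>i. sN (f i h) (b i)) [0..<n]))]
      (map (\<lambda>h'. (a, h')) (map (\<lambda>i. sN (f i h) (b i)) [0..<n]))"
    using N b a by (intro tensor_eq_sum_list_right) (auto simp: kmodule_def)
  then have "?T [(a, h)] (map (\<lambda>i. (a, sN (f i h) (b i))) [0..<n])"
    by (simp flip: h add: o_def)
  also have "?T \<dots> (map (\<lambda>i. (sM (f i h) a, b i)) [0..<n])"
  proof (rule tensor_eq_map_cong)
    fix i
    have "?T [(sM (f i h) a, b i)] [(a, sN (f i h) (b i))]"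
      using M N a b by (intro tensor_eq_balanced) (auto simp: kmodule_def)
    then show "?T [(a, sN (f i h) (b i))] [(sM (f i h) a, b i)]"
      by (rule tensor_eq_sym)
  qed
  finally show ?thesis by (simp add: ktensor_eq_def)
qed

lemma ktensor_eq_dual_basis_expansion:
  assumes M: "kmodule M sM" and N: "kmodule N sN"
    and b: "\<And>i. b i \<in> N" and expand: "\<And>h. h \<in> N \<Longrightarrow> h = sum_list (map (\<lambda>i. sN (f i h) (b i)) [0..<n])"
    and L: "set L \<subseteq> M \<times> N"
  shows "ktensor_eq M sM N sN L (map (\<lambda>i. (sum_list (map (\<lambda>(a, h). sM (f i h) a) L), b i)) [0..<n])"
proof -
  let ?T = "tensor_eq M N UNIV (\<lambda>m c. sM c m) sN"
  define F where "F p = (\<lambda>i. (sM (f i (snd p)) (fst p), b i))" for p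
  have "?T (concat (map (\<lambda>p. [p]) L)) (concat (map (\<lambda>p. map (F p) [0..<n]) L))"
  proof (rule tensor_eq_concat_map_cong)
    fix p assume "p \<in> set L"
    then obtain a h where ah: "p = (a, h)" "a \<in> M" "h \<in> N" using L by (cases p) auto
    then show "?T [p] (map (F p) [0..<n])"
      using ktensor_eq_dual_basis_expansion_single[where f = f and h = h, OF M N b expand[OF ah(3)] ah(2,3)]
      by (simp add: F_def ktensor_eq_def)
  qed
  then have "?T L (concat (map (\<lambda>p. map (\<lambda>i. F p i) [0..<n]) L))"
    by simp
  also have "?T \<dots> (concat (map (\<lambda>i. map (\<lambda>p. F p i) L) [0..<n]))"
    using L b M by (intro tensor_eq_mset mset_concat_map_swap) (auto simp: F_def kmodule_def)
  also have "?T \<dots> (concat (map (\<lambda>i. [(sum_list (map (\<lambda>(a, h). sM (f i h) a) L), b i)]) [0..<n]))"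
  proof (rule tensor_eq_concat_map_cong)
    fix i
    have "?T [(sum_list (map (\<lambda>p. sM (f i (snd p)) (fst p)) L), b i)]
             (map (\<lambda>a. (a, b i)) (map (\<lambda>p. sM (f i (snd p)) (fst p)) L))"
      using M L b by (intro tensor_eq_sum_list_left) (auto simp: kmodule_def)
    then show "?T (map (\<lambda>p. F p i) L) [(sum_list (map (\<lambda>(a, h). sM (f i h) a) L), b i)]"
      by (simp add: F_def case_prod_unfold o_def tensor_eq_sym)
  qed
  finally show ?thesis by (simp add: ktensor_eq_def)
qed

lemma ktensor_eq_by_dual_basis:
  assumes M: "kmodule M sM" and N: "kmodule N sN"
    and b: "\<And>i. b i \<in> N" and expand: "\<And>h. h \<in> N \<Longrightarrow> h = sum_list (map (\<lambda>i. sN (f i h) (b i)) [0..<n])"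
    and L: "set L \<subseteq> M \<times> N" and L': "set L' \<subseteq> M \<times> N"
    and coeff: "\<And>i. sum_list (map (\<lambda>(a, h). sM (f i h) a) L) = sum_list (map (\<lambda>(a, h). sM (f i h) a) L')"
  shows "ktensor_eq M sM N sN L L'"
proof -
  have "ktensor_eq M sM N sN L (map (\<lambda>i. (sum_list (map (\<lambda>(a, h). sM (f i h) a) L), b i)) [0..<n])"
    by (rule ktensor_eq_dual_basis_expansion[OF M N b], erule expand, rule L)
  moreover have "ktensor_eq M sM N sN L' (map (\<lambda>i. (sum_list (map (\<lambda>(a, h). sM (f i h) a) L), b i)) [0..<n])"
    unfolding coeff by (rule ktensor_eq_dual_basis_expansion[OF M N b], erule expand, rule L')
  ultimately show ?thesis
    unfolding ktensor_eq_def by (blast intro: tensor_eq_trans tensor_eq_sym)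
qed

lemma ktensor_eq_map_left:
  fixes sM :: "'k::comm_ring_1 \<Rightarrow> 'm::ab_group_add \<Rightarrow> 'm"
  assumes K: "ktensor_eq M sM N sN L L'"
    and M: "kmodule M sM" and N: "kmodule N sN"
    and \<phi>_closed: "\<And>m. m \<in> M \<Longrightarrow> \<phi> m \<in> M'"
    and \<phi>_add: "\<And>m m'. m \<in> M \<Longrightarrow> m' \<in> M \<Longrightarrow> \<phi> (m + m') = \<phi> m + \<phi> m'"
    and \<phi>_smult: "\<And>c m. m \<in> M \<Longrightarrow> \<phi> (sM c m) = sM' c (\<phi> m)"
  shows "ktensor_eq M' sM' N sN (map (\<lambda>(m, n). (\<phi> m, n)) L) (map (\<lambda>(m, n). (\<phi> m, n)) L')"
proof -
  let ?T = "tensor_eq M' N UNIV (\<lambda>m c. sM' c m) sN"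
  have M_closed: "\<And>m m'. m \<in> M \<Longrightarrow> m' \<in> M \<Longrightarrow> m + m' \<in> M" "\<And>c m. m \<in> M \<Longrightarrow> sM c m \<in> M"
    using M by (auto simp: kmodule_def)
  have N_closed: "\<And>n n'. n \<in> N \<Longrightarrow> n' \<in> N \<Longrightarrow> n + n' \<in> N" "\<And>c n. n \<in> N \<Longrightarrow> sN c n \<in> N"
    using N by (auto simp: kmodule_def)
  have "?T (concat (map (\<lambda>p. [(\<phi> (fst p), snd p)]) L)) (concat (map (\<lambda>p. [(\<phi> (fst p), snd p)]) L'))"
  proof (rule tensor_eq_induced_map[OF K[unfolded ktensor_eq_def]])
    fix m m' n assume mn: "m \<in> M" "m' \<in> M" "n \<in> N"
    then have "\<phi> m + \<phi> m' \<in> M'" using M_closed(1) \<phi>_closed by (simp flip: \<phi>_add)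
    with mn show "?T [(\<phi> (fst (m + m', n)), snd (m + m', n))]
        ([(\<phi> (fst (m, n)), snd (m, n))] @ [(\<phi> (fst (m', n)), snd (m', n))])"
      using tensor_eq_add_left[of "\<phi> m" M' "\<phi> m'" n N] M_closed \<phi>_closed
      by (simp add: \<phi>_add)
  next
    fix m n n' assume "m \<in> M" "n \<in> N" "n' \<in> N"
    then show "?T [(\<phi> (fst (m, n + n')), snd (m, n + n'))]
        ([(\<phi> (fst (m, n)), snd (m, n))] @ [(\<phi> (fst (m, n')), snd (m, n'))])"
      using tensor_eq_add_right[of "\<phi> m" M' n N n'] N_closed \<phi>_closed by simp
  next
    fix m c n assume mn: "m \<in> M" "c \<in> (UNIV :: 'k set)" "n \<in> N"
    then have "sM' c (\<phi> m) \<in> M'" using M_closed(2) \<phi>_closed by (simp flip: \<phi>_smult)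
    with mn show "?T [(\<phi> (fst (sM c m, n)), snd (sM c m, n))] [(\<phi> (fst (m, sN c n)), snd (m, sN c n))]"
      using tensor_eq_balanced[of "\<phi> m" M' c UNIV n N "\<lambda>m c. sM' c m" sN] N_closed \<phi>_closed
      by (simp add: \<phi>_smult)
  qed (use \<phi>_closed in auto)
  then show ?thesis by (simp add: ktensor_eq_def case_prod_unfold)
qed

lemma can_map_concat:
  "can_map mA rho z x y (concat (map F L)) = concat (map (\<lambda>p. can_map mA rho z x y (F p)) L)"
  by (induction L) (simp_all add: can_map_def)

lemma can_map_single: "can_map mA rho z x y [(a, a')] = map (\<lambda>(a0, h). (mA z x y a a0, h)) (rho x y a')"
  by (simp add: can_map_def)

section \<open>Comodule categories\<close>

locale comodule_category =
  fixes Hc :: "'x \<Rightarrow> 'x \<Rightarrow> 'h::ab_group_add set" and sH :: "'k::comm_ring_1 \<Rightarrow> 'h \<Rightarrow> 'h"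
    and mH :: "'x \<Rightarrow> 'x \<Rightarrow> 'x \<Rightarrow> 'h \<Rightarrow> 'h \<Rightarrow> 'h" and eH :: "'x \<Rightarrow> 'h"
    and Delta :: "'x \<Rightarrow> 'x \<Rightarrow> 'h \<Rightarrow> ('h \<times> 'h) list" and eps :: "'x \<Rightarrow> 'x \<Rightarrow> 'h \<Rightarrow> 'k"
    and Ac :: "'x \<Rightarrow> 'x \<Rightarrow> 'a::ab_group_add set" and sA :: "'k \<Rightarrow> 'a \<Rightarrow> 'a"
    and mA :: "'x \<Rightarrow> 'x \<Rightarrow> 'x \<Rightarrow> 'a \<Rightarrow> 'a \<Rightarrow> 'a" and eA :: "'x \<Rightarrow> 'a"
    and rho :: "'x \<Rightarrow> 'x \<Rightarrow> 'a \<Rightarrow> ('a \<times> 'h) list"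
  assumes H: "klin_cat Hc sH mH eH"
    and A: "comodule_cat Hc sH mH eH Delta eps Ac sA mA eA rho"
begin

abbreviation B :: "'x \<Rightarrow> 'a set" where
  "B u \<equiv> coinv Hc sH eH Ac sA rho u"

lemma A_klin_cat: "klin_cat Ac sA mA eA"
  using A by (simp add: comodule_cat_def)

lemma A_kmodule: "kmodule (Ac u v) sA"
  using A_klin_cat by (simp add: klin_cat_def)

lemma H_kmodule: "kmodule (Hc u v) sH"
  using H by (simp add: klin_cat_def)

lemma A_zero: "0 \<in> Ac u v"
  and A_add: "a \<in> Ac u v \<Longrightarrow> b \<in> Ac u v \<Longrightarrow> a + b \<in> Ac u v"
  and A_sA: "a \<in> Ac u v \<Longrightarrow> sA c a \<in> Ac u v"
  and sA_add: "a \<in> Ac u v \<Longrightarrow> b \<in> Ac u v \<Longrightarrow> sA c (a + b) = sA c a + sA c b"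
  and sA_add_scalar: "a \<in> Ac u v \<Longrightarrow> sA (c + d) a = sA c a + sA d a"
  and sA_mult: "a \<in> Ac u v \<Longrightarrow> sA (c * d) a = sA c (sA d a)"
  using A_kmodule[of u v] by (simp_all add: kmodule_def)

lemma H_add: "a \<in> Hc u v \<Longrightarrow> b \<in> Hc u v \<Longrightarrow> a + b \<in> Hc u v"
  and H_sH: "a \<in> Hc u v \<Longrightarrow> sH c a \<in> Hc u v"
  using H_kmodule[of u v] by (simp_all add: kmodule_def)

lemma sA_zero: "sA c 0 = 0"
  using sA_add[OF A_zero A_zero, of c] by simp

lemma mA_closed: "a \<in> Ac u v \<Longrightarrow> b \<in> Ac v w \<Longrightarrow> mA u v w a b \<in> Ac u w"
  and mA_add_left: "a \<in> Ac u v \<Longrightarrow> a' \<in> Ac u v \<Longrightarrow> b \<in> Ac v w \<Longrightarrow>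
    mA u v w (a + a') b = mA u v w a b + mA u v w a' b"
  and mA_add_right: "a \<in> Ac u v \<Longrightarrow> b \<in> Ac v w \<Longrightarrow> b' \<in> Ac v w \<Longrightarrow>
    mA u v w a (b + b') = mA u v w a b + mA u v w a b'"
  and mA_sA_left: "a \<in> Ac u v \<Longrightarrow> b \<in> Ac v w \<Longrightarrow> mA u v w (sA c a) b = sA c (mA u v w a b)"
  and mA_sA_right: "a \<in> Ac u v \<Longrightarrow> b \<in> Ac v w \<Longrightarrow> mA u v w a (sA c b) = sA c (mA u v w a b)"
  and mA_assoc: "a \<in> Ac t u \<Longrightarrow> b \<in> Ac u v \<Longrightarrow> d \<in> Ac v w \<Longrightarrow>
    mA t v w (mA t u v a b) d = mA t u w a (mA u v w b d)"
  and eA_closed: "eA u \<in> Ac u u"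
  and mA_eA_right: "a \<in> Ac u v \<Longrightarrow> mA u v v a (eA v) = a"
  using A_klin_cat by (simp_all add: klin_cat_def)

lemma mH_closed: "a \<in> Hc u v \<Longrightarrow> b \<in> Hc v w \<Longrightarrow> mH u v w a b \<in> Hc u w"
  and mH_add_left: "a \<in> Hc u v \<Longrightarrow> a' \<in> Hc u v \<Longrightarrow> b \<in> Hc v w \<Longrightarrow>
    mH u v w (a + a') b = mH u v w a b + mH u v w a' b"
  and mH_sH_left: "a \<in> Hc u v \<Longrightarrow> b \<in> Hc v w \<Longrightarrow> mH u v w (sH c a) b = sH c (mH u v w a b)"
  and mH_eH_left: "a \<in> Hc u v \<Longrightarrow> mH u u v (eH u) a = a"
  using H by (simp_all add: klin_cat_def)

lemma mA_zero_right: "a \<in> Ac u v \<Longrightarrow> mA u v w a 0 = 0"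
  using mA_add_right[OF _ A_zero A_zero] by simp

lemma mA_zero_left: "b \<in> Ac v w \<Longrightarrow> mA u v w 0 b = 0"
  using mA_add_left[OF A_zero A_zero] by simp

lemma A_sum_list: "(\<And>j. j \<in> set J \<Longrightarrow> F j \<in> Ac u v) \<Longrightarrow> sum_list (map F J) \<in> Ac u v"
  by (induction J) (auto simp: A_zero A_add)

lemma mA_sum_list_right:
  "a \<in> Ac u v \<Longrightarrow> (\<And>j. j \<in> set J \<Longrightarrow> F j \<in> Ac v w) \<Longrightarrow>
    mA u v w a (sum_list (map F J)) = sum_list (map (\<lambda>j. mA u v w a (F j)) J)"
  by (induction J) (auto simp: mA_zero_right mA_add_right A_sum_list)

lemma mA_sum_list_left:
  "b \<in> Ac v w \<Longrightarrow> (\<And>j. j \<in> set J \<Longrightarrow> F j \<in> Ac u v) \<Longrightarrow>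
    mA u v w (sum_list (map F J)) b = sum_list (map (\<lambda>j. mA u v w (F j) b) J)"
  by (induction J) (auto simp: mA_zero_left mA_add_left A_sum_list)

lemma sA_sum_list:
  "(\<And>j. j \<in> set J \<Longrightarrow> F j \<in> Ac u v) \<Longrightarrow>
    sA c (sum_list (map F J)) = sum_list (map (\<lambda>j. sA c (F j)) J)"
proof (induction J)
  case (Cons j J)
  then show ?case using sA_add[of "F j" u v "sum_list (map F J)"] by (simp add: A_sum_list)
qed (simp add: sA_zero)

lemma rho_closed: "a \<in> Ac u v \<Longrightarrow> set (rho u v a) \<subseteq> Ac u v \<times> Hc u v"
  and rho_add: "a \<in> Ac u v \<Longrightarrow> a' \<in> Ac u v \<Longrightarrow>
    ktensor_eq (Ac u v) sA (Hc u v) sH (rho u v (a + a')) (rho u v a @ rho u v a')"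
  and rho_mA: "a \<in> Ac u v \<Longrightarrow> b \<in> Ac v w \<Longrightarrow>
    ktensor_eq (Ac u w) sA (Hc u w) sH (rho u w (mA u v w a b))
      (concat (map (\<lambda>(a0, a1). map (\<lambda>(b0, b1). (mA u v w a0 b0, mH u v w a1 b1)) (rho v w b))
        (rho u v a)))"
  and rho_eA: "ktensor_eq (Ac u u) sA (Hc u u) sH (rho u u (eA u)) [(eA u, eH u)]"
  using A by (simp_all add: comodule_cat_def)

lemma coinv_subset: "b \<in> B u \<Longrightarrow> b \<in> Ac u u"
  and coinv_rho: "b \<in> B u \<Longrightarrow> ktensor_eq (Ac u u) sA (Hc u u) sH (rho u u b) [(b, eH u)]"
  by (simp_all add: coinv_def)

lemma eA_coinv: "eA u \<in> B u"
  by (simp add: coinv_def eA_closed rho_eA)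

lemma zero_coinv: "0 \<in> B u"
proof -
  have "ktensor_eq (Ac u u) sA (Hc u u) sH (rho u u 0) (rho u u 0 @ rho u u 0)"
    using rho_add[OF A_zero A_zero, of u u] by simp
  then have "tensor_eq (Ac u u) (Hc u u) UNIV (\<lambda>m c. sA c m) sH (rho u u 0) []"
    unfolding ktensor_eq_def by (rule tensor_eq_Nil_if_double)
  moreover have "tensor_eq (Ac u u) (Hc u u) UNIV (\<lambda>m c. sA c m) sH [(0, eH u)] []"
    using A_zero H by (intro tensor_eq_zero_left) (simp_all add: klin_cat_def)
  ultimately have "tensor_eq (Ac u u) (Hc u u) UNIV (\<lambda>m c. sA c m) sH (rho u u 0) [(0, eH u)]"
    by (blast intro: tensor_eq_trans tensor_eq_sym)
  then show ?thesis
    by (simp add: coinv_def ktensor_eq_def A_zero)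
qed

lemma ktensor_eq_mA_left:
  assumes "a \<in> Ac w u" and "ktensor_eq (Ac u v) sA (Hc s t) sH L L'"
  shows "ktensor_eq (Ac w v) sA (Hc s t) sH (map (\<lambda>(a0, h). (mA w u v a a0, h)) L)
           (map (\<lambda>(a0, h). (mA w u v a a0, h)) L')"
  using assms(1)
  by (intro ktensor_eq_map_left[OF assms(2) A_kmodule H_kmodule])
    (auto simp: mA_closed mA_add_right mA_sA_right)

lemma ktensor_eq_tensor_mult_right:
  assumes K: "ktensor_eq (Ac u v) sA (Hc u v) sH L L'" and P: "set P \<subseteq> Ac v w \<times> Hc v w"
  defines "Phi \<equiv> \<lambda>(b0, b1). map (\<lambda>(a0, h). (mA u v w b0 a0, mH u v w b1 h)) P"
  shows "ktensor_eq (Ac u w) sA (Hc u w) sH (concat (map Phi L)) (concat (map Phi L'))"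
  unfolding ktensor_eq_def
proof (rule tensor_eq_induced_map[OF K[unfolded ktensor_eq_def]])
  let ?T = "tensor_eq (Ac u w) (Hc u w) UNIV (\<lambda>m c. sA c m) sH"
  fix p assume "p \<in> Ac u v \<times> Hc u v"
  then show "set (Phi p) \<subseteq> Ac u w \<times> Hc u w"
    using P by (auto simp: Phi_def mA_closed mH_closed)
next
  let ?T = "tensor_eq (Ac u w) (Hc u w) UNIV (\<lambda>m c. sA c m) sH"
  fix b0 b0' b1 assume b: "b0 \<in> Ac u v" "b0' \<in> Ac u v" "b1 \<in> Hc u v"
  show "?T (Phi (b0 + b0', b1)) (Phi (b0, b1) @ Phi (b0', b1))"
    unfolding Phi_def prod.case
  proof (rule tensor_eq_map_split)
    fix p assume "p \<in> set P"
    then obtain a0 h where "p = (a0, h)" "a0 \<in> Ac v w" "h \<in> Hc v w" using P by auto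
    with b show "?T [case p of (a0, h) \<Rightarrow> (mA u v w (b0 + b0') a0, mH u v w b1 h)]
        [case p of (a0, h) \<Rightarrow> (mA u v w b0 a0, mH u v w b1 h),
         case p of (a0, h) \<Rightarrow> (mA u v w b0' a0, mH u v w b1 h)]"
      by (simp add: mA_add_left) (intro tensor_eq_add_left; simp add: mA_closed mH_closed A_add)
  qed
next
  let ?T = "tensor_eq (Ac u w) (Hc u w) UNIV (\<lambda>m c. sA c m) sH"
  fix b0 b1 b1' assume b: "b0 \<in> Ac u v" "b1 \<in> Hc u v" "b1' \<in> Hc u v"
  show "?T (Phi (b0, b1 + b1')) (Phi (b0, b1) @ Phi (b0, b1'))"
    unfolding Phi_def prod.case
  proof (rule tensor_eq_map_split)
    fix p assume "p \<in> set P"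
    then obtain a0 h where "p = (a0, h)" "a0 \<in> Ac v w" "h \<in> Hc v w" using P by auto
    with b show "?T [case p of (a0, h) \<Rightarrow> (mA u v w b0 a0, mH u v w (b1 + b1') h)]
        [case p of (a0, h) \<Rightarrow> (mA u v w b0 a0, mH u v w b1 h),
         case p of (a0, h) \<Rightarrow> (mA u v w b0 a0, mH u v w b1' h)]"
      by (simp add: mH_add_left) (intro tensor_eq_add_right; simp add: mA_closed mH_closed H_add)
  qed
next
  let ?T = "tensor_eq (Ac u w) (Hc u w) UNIV (\<lambda>m c. sA c m) sH"
  fix b0 c b1 assume b: "b0 \<in> Ac u v" "c \<in> (UNIV :: 'k set)" "b1 \<in> Hc u v"
  show "?T (Phi (sA c b0, b1)) (Phi (b0, sH c b1))"
    unfolding Phi_def prod.case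
  proof (rule tensor_eq_map_cong)
    fix p assume "p \<in> set P"
    then obtain a0 h where "p = (a0, h)" "a0 \<in> Ac v w" "h \<in> Hc v w" using P by auto
    with b show "?T [case p of (a0, h) \<Rightarrow> (mA u v w (sA c b0) a0, mH u v w b1 h)]
        [case p of (a0, h) \<Rightarrow> (mA u v w b0 a0, mH u v w (sH c b1) h)]"
      by (simp add: mA_sA_left mH_sH_left) (intro tensor_eq_balanced; simp add: mA_closed mH_closed A_sA H_sH)
  qed
qed

lemma rho_mA_coinv:
  assumes b: "b \<in> B x" and a: "a \<in> Ac x y"
  shows "ktensor_eq (Ac x y) sA (Hc x y) sH (rho x y (mA x x y b a))
           (map (\<lambda>(a0, h). (mA x x y b a0, h)) (rho x y a))"
proof -
  define Phi where "Phi = (\<lambda>(b0, b1). map (\<lambda>(a0, h). (mA x x y b0 a0, mH x x y b1 h)) (rho x y a))"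
  have "ktensor_eq (Ac x y) sA (Hc x y) sH (rho x y (mA x x y b a)) (concat (map Phi (rho x x b)))"
    using rho_mA[OF coinv_subset[OF b] a] unfolding Phi_def .
  also have "ktensor_eq (Ac x y) sA (Hc x y) sH \<dots> (concat (map Phi [(b, eH x)]))"
    unfolding Phi_def using coinv_rho[OF b] rho_closed[OF a] by (rule ktensor_eq_tensor_mult_right)
  also have "concat (map Phi [(b, eH x)]) = map (\<lambda>(a0, h). (mA x x y b a0, h)) (rho x y a)"
    unfolding Phi_def using rho_closed[OF a] by (auto simp: mH_eH_left intro!: map_cong)
  finally show ?thesis .
qed

abbreviation coinv_tensor_eq :: "'x \<Rightarrow> 'x \<Rightarrow> 'x \<Rightarrow> ('a \<times> 'a) list \<Rightarrow> ('a \<times> 'a) list \<Rightarrow> bool" where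
  "coinv_tensor_eq z x y \<equiv> tensor_eq (Ac z x) (Ac x y) (B x) (\<lambda>a b. mA z x x a b) (\<lambda>b a'. mA x x y b a')"

lemma can_map_respects:
  assumes "coinv_tensor_eq z x y xs ys"
  shows "ktensor_eq (Ac z y) sA (Hc x y) sH (can_map mA rho z x y xs) (can_map mA rho z x y ys)"
proof -
  let ?T = "tensor_eq (Ac z y) (Hc x y) UNIV (\<lambda>m c. sA c m) sH"
  let ?can = "\<lambda>p. can_map mA rho z x y [p]"
  have "?T (concat (map ?can xs)) (concat (map ?can ys))"
  proof (rule tensor_eq_induced_map[OF assms])
    fix p assume "p \<in> Ac z x \<times> Ac x y"
    then show "set (?can p) \<subseteq> Ac z y \<times> Hc x y"
      using rho_closed by (fastforce simp: can_map_def mA_closed)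
  next
    fix a1 a2 a' assume a: "a1 \<in> Ac z x" "a2 \<in> Ac z x" "a' \<in> Ac x y"
    show "?T (?can (a1 + a2, a')) (?can (a1, a') @ ?can (a2, a'))"
      unfolding can_map_single prod.case
    proof (rule tensor_eq_map_split)
      fix p assume "p \<in> set (rho x y a')"
      then obtain a0 h where "p = (a0, h)" "a0 \<in> Ac x y" "h \<in> Hc x y" using rho_closed[OF a(3)] by auto
      with a show "?T [case p of (a0, h) \<Rightarrow> (mA z x y (a1 + a2) a0, h)]
          [case p of (a0, h) \<Rightarrow> (mA z x y a1 a0, h), case p of (a0, h) \<Rightarrow> (mA z x y a2 a0, h)]"
        by (simp add: mA_add_left) (intro tensor_eq_add_left; simp add: mA_closed A_add)
    qed
  next
    fix a a1 a2 assume a: "a \<in> Ac z x" "a1 \<in> Ac x y" "a2 \<in> Ac x y"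
    show "?T (?can (a, a1 + a2)) (?can (a, a1) @ ?can (a, a2))"
      using ktensor_eq_mA_left[OF a(1) rho_add[OF a(2,3)]] by (simp add: can_map_single ktensor_eq_def)
  next
    fix a b a' assume a: "a \<in> Ac z x" "b \<in> B x" "a' \<in> Ac x y"
    have "map (\<lambda>(a0, h). (mA z x y a a0, h)) (map (\<lambda>(a0, h). (mA x x y b a0, h)) (rho x y a')) =
        map (\<lambda>(a0, h). (mA z x y (mA z x x a b) a0, h)) (rho x y a')"
      using rho_closed[OF a(3)] a coinv_subset[OF a(2)] by (auto simp: mA_assoc)
    note assoc = this
    have "?T (?can (a, mA x x y b a')) (?can (mA z x x a b, a'))"
      using ktensor_eq_mA_left[OF a(1) rho_mA_coinv[OF a(2,3)]]
      unfolding can_map_single ktensor_eq_def assoc .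
    then show "?T (?can (mA z x x a b, a')) (?can (a, mA x x y b a'))"
      by (rule tensor_eq_sym)
  qed
  then show ?thesis
    by (simp add: can_map_def ktensor_eq_def)
qed

end

section \<open>The inverse of the canonical map\<close>

locale galois_dual_bases = comodule_category Hc sH mH eH Delta eps Ac sA mA eA rho
  for Hc :: "'x \<Rightarrow> 'x \<Rightarrow> 'h::ab_group_add set" and sH :: "'k::comm_ring_1 \<Rightarrow> 'h \<Rightarrow> 'h"
    and mH and eH and Delta and eps
    and Ac :: "'x \<Rightarrow> 'x \<Rightarrow> 'a::ab_group_add set" and sA and mA and eA and rho +
  fixes x y :: 'x and n :: nat and f :: "nat \<Rightarrow> 'h \<Rightarrow> 'k" and hb :: "nat \<Rightarrow> 'h"
    and m :: nat and phi :: "nat \<Rightarrow> 'a \<Rightarrow> 'a" and e :: "nat \<Rightarrow> 'a" and g :: "nat \<Rightarrow> 'h \<Rightarrow> 'a"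
  assumes f_Hom: "f i \<in> Hom UNIV (Hc x y) sH UNIV (*)"
    and hb_closed: "hb i \<in> Hc x y"
    and H_expand: "h \<in> Hc x y \<Longrightarrow> h = sum_list (map (\<lambda>i. sH (f i h) (hb i)) [0..<n])"
    and phi_coinv: "a \<in> Ac x y \<Longrightarrow> phi j a \<in> B x"
    and e_closed: "e j \<in> Ac x y"
    and A_expand: "a \<in> Ac x y \<Longrightarrow> a = sum_list (map (\<lambda>j. mA x x y (phi j a) (e j)) [0..<m])"
    and g_Hom: "g j \<in> Hom UNIV (Hc x y) sH (Ac y x) sA"
    and delta_g: "delta_map Ac mA rho x y x (g j) = phi j"
    and delta_yy_inj: "inj_on (delta_map Ac mA rho x y y) (Hom UNIV (Hc x y) sH (Ac y y) sA)"
begin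

lemma f_add: "h \<in> Hc x y \<Longrightarrow> h' \<in> Hc x y \<Longrightarrow> f i (h + h') = f i h + f i h'"
  and f_sH: "h \<in> Hc x y \<Longrightarrow> f i (sH c h) = c * f i h"
  using f_Hom[of i] by (simp_all add: Hom_def lin_map_def)

lemma g_closed: "h \<in> Hc x y \<Longrightarrow> g j h \<in> Ac y x"
  and g_add: "h \<in> Hc x y \<Longrightarrow> h' \<in> Hc x y \<Longrightarrow> g j (h + h') = g j h + g j h'"
  and g_sH: "h \<in> Hc x y \<Longrightarrow> g j (sH c h) = sA c (g j h)"
  using g_Hom[of j] by (simp_all add: Hom_def lin_map_def)

lemma g_delta: "a \<in> Ac x y \<Longrightarrow> sum_list (map (\<lambda>(a0, h). mA x y x a0 (g j h)) (rho x y a)) = phi j a"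
  using fun_cong[OF delta_g[of j], of a] by (simp add: delta_map_def)

definition coeff :: "nat \<Rightarrow> ('a \<times> 'h) list \<Rightarrow> 'a" where
  "coeff i L = sum_list (map (\<lambda>(a0, h). sA (f i h) a0) L)"

definition coord :: "nat \<Rightarrow> 'a \<Rightarrow> 'a" where
  "coord i a = coeff i (rho x y a)"

lemma coeff_respects:
  assumes "ktensor_eq (Ac u v) sA (Hc x y) sH L L'"
  shows "coeff i L = coeff i L'"
  unfolding coeff_def
proof (rule tensor_eq_induced_sum[OF assms[unfolded ktensor_eq_def]])
  fix a a' h assume "a \<in> Ac u v" "a' \<in> Ac u v" "h \<in> Hc x y"
  then show "(case (a + a', h) of (a0, h) \<Rightarrow> sA (f i h) a0) =
      (case (a, h) of (a0, h) \<Rightarrow> sA (f i h) a0) + (case (a', h) of (a0, h) \<Rightarrow> sA (f i h) a0)"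
    by (simp add: sA_add)
next
  fix a h h' assume "a \<in> Ac u v" "h \<in> Hc x y" "h' \<in> Hc x y"
  then show "(case (a, h + h') of (a0, h) \<Rightarrow> sA (f i h) a0) =
      (case (a, h) of (a0, h) \<Rightarrow> sA (f i h) a0) + (case (a, h') of (a0, h) \<Rightarrow> sA (f i h) a0)"
    by (simp add: sA_add_scalar f_add)
next
  fix a c h assume "a \<in> Ac u v" "c \<in> (UNIV :: 'k set)" "h \<in> Hc x y"
  then show "(case (sA c a, h) of (a0, h) \<Rightarrow> sA (f i h) a0) = (case (a, sH c h) of (a0, h) \<Rightarrow> sA (f i h) a0)"
    by (simp add: f_sH sA_mult[symmetric] mult.commute)
qed

lemma coeff_concat: "coeff i (concat (map F P)) = sum_list (map (\<lambda>p. coeff i (F p)) P)"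
  by (simp add: coeff_def sum_list_map_concat)

lemma coeff_closed: "set L \<subseteq> Ac u v \<times> Hc x y \<Longrightarrow> coeff i L \<in> Ac u v"
  unfolding coeff_def by (intro A_sum_list) (auto simp: A_sA)

lemma coeff_mA_left:
  assumes c: "c \<in> Ac w u" and L: "set L \<subseteq> Ac u v \<times> Hc x y"
  shows "coeff i (map (\<lambda>(a0, h). (mA w u v c a0, h)) L) = mA w u v c (coeff i L)"
proof -
  have "coeff i (map (\<lambda>(a0, h). (mA w u v c a0, h)) L) = sum_list (map (\<lambda>(a0, h). mA w u v c (sA (f i h) a0)) L)"
    unfolding coeff_def using c L
    by (auto simp: case_prod_unfold mA_sA_right intro!: arg_cong[where f = sum_list] map_cong)
  also have "\<dots> = mA w u v c (coeff i L)"
    unfolding coeff_def using c L by (subst mA_sum_list_right) (auto simp: A_sA case_prod_unfold)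
  finally show ?thesis .
qed

lemma coord_add: "a \<in> Ac x y \<Longrightarrow> a' \<in> Ac x y \<Longrightarrow> coord i (a + a') = coord i a + coord i a'"
  unfolding coord_def using coeff_respects[OF rho_add] by (simp add: coeff_def)

lemma coord_closed: "a \<in> Ac x y \<Longrightarrow> coord i a \<in> Ac x y"
  unfolding coord_def by (rule coeff_closed[OF rho_closed])

lemma coord_mA_coinv:
  assumes b: "b \<in> B x" and a: "a \<in> Ac x y"
  shows "coord i (mA x x y b a) = mA x x y b (coord i a)"
  unfolding coord_def coeff_respects[OF rho_mA_coinv[OF b a]]
  using coeff_mA_left[OF coinv_subset[OF b] rho_closed[OF a]] .

lemma coord_sum_list: "(\<And>j. j \<in> set J \<Longrightarrow> u j \<in> Ac x y) \<Longrightarrow>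
    coord i (sum_list (map u J)) = sum_list (map (\<lambda>j. coord i (u j)) J)"
proof (induction J)
  case Nil then show ?case using coord_add[OF A_zero A_zero, of i] by simp
next
  case (Cons j J)
  have "sum_list (map u J) \<in> Ac x y" using Cons.prems by (intro A_sum_list) auto
  then show ?case using Cons by (simp add: coord_add)
qed

lemma coord_expand: "a \<in> Ac x y \<Longrightarrow> sum_list (map (\<lambda>j. mA x x y (phi j a) (coord i (e j))) [0..<m]) = coord i a"
proof -
  assume a: "a \<in> Ac x y"
  have "sum_list (map (\<lambda>j. mA x x y (phi j a) (coord i (e j))) [0..<m]) =
        sum_list (map (\<lambda>j. coord i (mA x x y (phi j a) (e j))) [0..<m])"
    using a by (intro arg_cong[where f = sum_list] map_cong) (auto simp: coord_mA_coinv phi_coinv e_closed)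
  also have "\<dots> = coord i (sum_list (map (\<lambda>j. mA x x y (phi j a) (e j)) [0..<m]))"
    using a by (intro coord_sum_list[symmetric]) (auto simp: mA_closed coinv_subset phi_coinv e_closed)
  also have "\<dots> = coord i a" using A_expand[OF a] by simp
  finally show ?thesis .
qed

definition g_coord :: "nat \<Rightarrow> 'h \<Rightarrow> 'a" where
  "g_coord i = restrict (\<lambda>h. sum_list (map (\<lambda>j. mA y x y (g j h) (coord i (e j))) [0..<m])) (Hc x y)"

definition f_unit :: "nat \<Rightarrow> 'h \<Rightarrow> 'a" where
  "f_unit i = restrict (\<lambda>h. sA (f i h) (eA y)) (Hc x y)"

lemma g_coord_Hom: "g_coord i \<in> Hom UNIV (Hc x y) sH (Ac y y) sA"
  unfolding Hom_def lin_map_def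
proof (intro CollectI conjI ballI)
  fix h assume "h \<in> Hc x y"
  then show "g_coord i h \<in> Ac y y"
    unfolding g_coord_def by (auto intro!: A_sum_list simp: mA_closed g_closed coord_closed e_closed)
next
  fix h h' assume "h \<in> Hc x y" "h' \<in> Hc x y"
  then show "g_coord i (h + h') = g_coord i h + g_coord i h'"
    unfolding g_coord_def by (simp add: H_add g_add mA_add_left g_closed coord_closed e_closed sum_list_addf)
next
  fix c h assume "c \<in> (UNIV :: 'k set)" "h \<in> Hc x y"
  then show "g_coord i (sH c h) = sA c (g_coord i h)"
    unfolding g_coord_def
    by (simp add: H_sH g_sH mA_sA_left g_closed coord_closed e_closed)
      (subst sA_sum_list[where u = y and v = y]; simp add: mA_closed g_closed coord_closed e_closed)
qed (simp add: g_coord_def)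

lemma f_unit_Hom: "f_unit i \<in> Hom UNIV (Hc x y) sH (Ac y y) sA"
  unfolding Hom_def lin_map_def f_unit_def
  by (simp add: A_sA eA_closed H_add H_sH f_add f_sH sA_add_scalar[OF eA_closed] sA_mult[OF eA_closed])

lemma delta_g_coord: "delta_map Ac mA rho x y y (g_coord i) = restrict (coord i) (Ac x y)"
  unfolding delta_map_def
proof (rule restrict_ext)
  fix a assume a: "a \<in> Ac x y"
  have rs: "set (rho x y a) \<subseteq> Ac x y \<times> Hc x y" using rho_closed[OF a] .
  define T where "T j a0 h = mA x x y (mA x y x a0 (g j h)) (coord i (e j))" for j a0 h
  have "sum_list (map (\<lambda>(a0, h). mA x y y a0 (g_coord i h)) (rho x y a)) =
      sum_list (map (\<lambda>(a0, h). sum_list (map (\<lambda>j. T j a0 h) [0..<m])) (rho x y a))"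
    using rs unfolding g_coord_def T_def
    by (intro sum_map_cong, simp, subst mA_sum_list_right)
      (auto simp: mA_closed g_closed coord_closed e_closed mA_assoc)
  also have "\<dots> = sum_list (map (\<lambda>j. sum_list (map (\<lambda>(a0, h). T j a0 h) (rho x y a))) [0..<m])"
    using sum_list_map_swap[of "\<lambda>p j. T j (fst p) (snd p)" "[0..<m]" "rho x y a"]
    by (simp add: case_prod_unfold)
  also have "\<dots> = sum_list (map (\<lambda>j. mA x x y (sum_list (map (\<lambda>(a0, h). mA x y x a0 (g j h)) (rho x y a)))
      (coord i (e j))) [0..<m])"
    using rs unfolding T_def
    by (intro arg_cong[where f = sum_list] map_cong refl, subst mA_sum_list_left)
      (auto simp: coord_closed e_closed mA_closed g_closed case_prod_unfold)
  also have "\<dots> = coord i a"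
    using a by (simp add: g_delta coord_expand)
  finally show "sum_list (map (\<lambda>(a0, h). mA x y y a0 (g_coord i h)) (rho x y a)) = coord i a" .
qed

lemma delta_f_unit: "delta_map Ac mA rho x y y (f_unit i) = restrict (coord i) (Ac x y)"
  unfolding delta_map_def
proof (rule restrict_ext)
  fix a assume "a \<in> Ac x y"
  then show "sum_list (map (\<lambda>(a0, h). mA x y y a0 (f_unit i h)) (rho x y a)) = coord i a"
    unfolding coord_def coeff_def f_unit_def using rho_closed[of a x y]
    by (intro sum_map_cong) (auto simp: mA_sA_right eA_closed mA_eA_right)
qed

lemma g_coord_sum:
  assumes "h \<in> Hc x y"
  shows "sum_list (map (\<lambda>j. mA y x y (g j h) (coord i (e j))) [0..<m]) = sA (f i h) (eA y)"
proof -
  have "g_coord i = f_unit i"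
    using inj_onD[OF delta_yy_inj _ g_coord_Hom f_unit_Hom] delta_g_coord delta_f_unit by simp
  then have "g_coord i h = f_unit i h" by simp
  with assms show ?thesis by (simp add: g_coord_def f_unit_def)
qed

definition can_inv_pair :: "'x \<Rightarrow> 'a \<times> 'h \<Rightarrow> ('a \<times> 'a) list" where
  "can_inv_pair z = (\<lambda>(a, h). map (\<lambda>j. (mA z y x a (g j h), e j)) [0..<m])"

definition can_inv :: "'x \<Rightarrow> ('a \<times> 'h) list \<Rightarrow> ('a \<times> 'a) list" where
  "can_inv z L = concat (map (can_inv_pair z) L)"

lemma can_inv_pair_closed: "a \<in> Ac z y \<Longrightarrow> h \<in> Hc x y \<Longrightarrow> set (can_inv_pair z (a, h)) \<subseteq> Ac z x \<times> Ac x y"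
  by (auto simp: can_inv_pair_def mA_closed g_closed e_closed)

lemma can_inv_closed: "set L \<subseteq> Ac z y \<times> Hc x y \<Longrightarrow> set (can_inv z L) \<subseteq> Ac z x \<times> Ac x y"
  unfolding can_inv_def using can_inv_pair_closed by fastforce

lemma can_inv_respects:
  assumes K: "ktensor_eq (Ac z y) sA (Hc x y) sH L L'"
  shows "coinv_tensor_eq z x y (can_inv z L) (can_inv z L')"
  unfolding can_inv_def
proof (rule tensor_eq_induced_map[OF K[unfolded ktensor_eq_def]])
  fix p assume "p \<in> Ac z y \<times> Hc x y"
  then show "set (can_inv_pair z p) \<subseteq> Ac z x \<times> Ac x y" using can_inv_pair_closed by (cases p) auto
next
  fix a a' h assume h: "a \<in> Ac z y" "a' \<in> Ac z y" "h \<in> Hc x y"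
  show "coinv_tensor_eq z x y (can_inv_pair z (a + a', h)) (can_inv_pair z (a, h) @ can_inv_pair z (a', h))"
    unfolding can_inv_pair_def prod.case
    by (rule tensor_eq_map_split)
      (use h in \<open>simp add: mA_add_left g_closed, intro tensor_eq_add_left;
        simp add: mA_closed g_closed e_closed A_add\<close>)
next
  fix a h h' assume h: "a \<in> Ac z y" "h \<in> Hc x y" "h' \<in> Hc x y"
  show "coinv_tensor_eq z x y (can_inv_pair z (a, h + h')) (can_inv_pair z (a, h) @ can_inv_pair z (a, h'))"
    unfolding can_inv_pair_def prod.case
    by (rule tensor_eq_map_split)
      (use h in \<open>simp add: g_add mA_add_right g_closed, intro tensor_eq_add_left;
        simp add: mA_closed g_closed e_closed A_add\<close>)
next
  fix a r h assume h: "a \<in> Ac z y" "r \<in> (UNIV :: 'k set)" "h \<in> Hc x y"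
  have eq: "can_inv_pair z (sA r a, h) = can_inv_pair z (a, sH r h)"
    using h by (simp add: can_inv_pair_def g_sH mA_sA_left mA_sA_right g_closed)
  have "coinv_tensor_eq z x y (can_inv_pair z (sA r a, h)) (can_inv_pair z (sA r a, h))"
    by (rule tensor_eq_refl[OF can_inv_pair_closed[OF A_sA[OF h(1)] h(3)]])
  then show "coinv_tensor_eq z x y (can_inv_pair z (sA r a, h)) (can_inv_pair z (a, sH r h))"
    unfolding eq .
qed

lemma sum_rho_g:
  assumes a: "a \<in> Ac z x" and a': "a' \<in> Ac x y"
  shows "sum_list (map (\<lambda>(a0, h). mA z y x (mA z x y a a0) (g j h)) (rho x y a')) = mA z x x a (phi j a')"
proof -
  have "sum_list (map (\<lambda>(a0, h). mA z y x (mA z x y a a0) (g j h)) (rho x y a')) =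
      sum_list (map (\<lambda>(a0, h). mA z x x a (mA x y x a0 (g j h))) (rho x y a'))"
    using rho_closed[OF a'] a by (intro sum_map_cong) (auto simp: mA_assoc g_closed)
  also have "\<dots> = mA z x x a (sum_list (map (\<lambda>(a0, h). mA x y x a0 (g j h)) (rho x y a')))"
    using rho_closed[OF a'] a by (subst mA_sum_list_right) (auto simp: mA_closed g_closed case_prod_unfold)
  finally show ?thesis using g_delta[OF a'] by simp
qed

lemma can_inv_can_pair:
  assumes a: "a \<in> Ac z x" and a': "a' \<in> Ac x y"
  shows "coinv_tensor_eq z x y (can_inv z (can_map mA rho z x y [(a, a')])) [(a, a')]"
proof -
  define P where "P = rho x y a'"
  have P: "set P \<subseteq> Ac x y \<times> Hc x y" using rho_closed[OF a'] unfolding P_def .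
  define X where "X p j = mA z y x (mA z x y a (fst p)) (g j (snd p))" for p j
  have X: "p \<in> set P \<Longrightarrow> X p j \<in> Ac z x" for p j
    using P a by (auto simp: X_def mA_closed g_closed)
  have "can_inv z (can_map mA rho z x y [(a, a')]) = concat (map (\<lambda>p. map (\<lambda>j. (X p j, e j)) [0..<m]) P)"
    by (simp add: P_def can_map_def can_inv_def can_inv_pair_def X_def case_prod_unfold o_def)
  also have "coinv_tensor_eq z x y \<dots> (concat (map (\<lambda>j. map (\<lambda>p. (X p j, e j)) P) [0..<m]))"
    by (rule tensor_eq_mset[OF mset_concat_map_swap]) (auto simp: X e_closed)
  also have "coinv_tensor_eq z x y \<dots> (concat (map (\<lambda>j. [(a, mA x x y (phi j a') (e j))]) [0..<m]))"
  proof (rule tensor_eq_concat_map_cong)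
    fix j
    have "coinv_tensor_eq z x y [(sum_list (map (\<lambda>p. X p j) P), e j)] (map (\<lambda>c. (c, e j)) (map (\<lambda>p. X p j) P))"
      by (rule tensor_eq_sum_list_left[OF A_zero A_add e_closed]) (auto simp: X)
    moreover have "sum_list (map (\<lambda>p. X p j) P) = mA z x x a (phi j a')"
      using sum_rho_g[OF a a', of j] by (simp add: P_def X_def case_prod_unfold)
    ultimately have "coinv_tensor_eq z x y (map (\<lambda>p. (X p j, e j)) P) [(mA z x x a (phi j a'), e j)]"
      by (simp add: tensor_eq_sym o_def)
    also have "coinv_tensor_eq z x y \<dots> [(a, mA x x y (phi j a') (e j))]"
      using a phi_coinv[OF a'] by (intro tensor_eq_balanced) (auto simp: e_closed mA_closed coinv_subset)
    finally show "coinv_tensor_eq z x y (map (\<lambda>p. (X p j, e j)) P) [(a, mA x x y (phi j a') (e j))]" .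
  qed
  also have "coinv_tensor_eq z x y \<dots> [(a, a')]"
  proof -
    have "coinv_tensor_eq z x y [(a, sum_list (map (\<lambda>j. mA x x y (phi j a') (e j)) [0..<m]))]
        (map (\<lambda>c. (a, c)) (map (\<lambda>j. mA x x y (phi j a') (e j)) [0..<m]))"
      using a' by (intro tensor_eq_sum_list_right[OF A_zero A_add a])
        (auto simp: mA_closed coinv_subset phi_coinv e_closed)
    then show ?thesis
      using A_expand[OF a'] by (simp add: tensor_eq_sym o_def)
  qed
  finally show ?thesis .
qed

lemma can_inv_can:
  assumes "set xs \<subseteq> Ac z x \<times> Ac x y"
  shows "coinv_tensor_eq z x y (can_inv z (can_map mA rho z x y xs)) xs"
proof -
  have "can_inv z (can_map mA rho z x y xs) = concat (map (\<lambda>p. can_inv z (can_map mA rho z x y [p])) xs)"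
    using can_map_concat[of mA rho z x y "\<lambda>p. [p]" xs] by (simp add: can_inv_def concat_map_concat)
  also have "coinv_tensor_eq z x y \<dots> (concat (map (\<lambda>p. [p]) xs))"
    using assms by (intro tensor_eq_concat_map_cong) (auto intro: can_inv_can_pair)
  finally show ?thesis by simp
qed

lemma coeff_can_map_can_inv_pair:
  assumes a: "a \<in> Ac z y" and h: "h \<in> Hc x y"
  shows "coeff i (can_map mA rho z x y (can_inv_pair z (a, h))) = sA (f i h) a"
proof -
  define c where "c j = mA z y x a (g j h)" for j
  have c: "c j \<in> Ac z x" for j using a h by (simp add: c_def mA_closed g_closed)
  have "coeff i (can_map mA rho z x y (can_inv_pair z (a, h))) =
      sum_list (map (\<lambda>j. coeff i (can_map mA rho z x y [(c j, e j)])) [0..<m])"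
    using can_map_concat[of mA rho z x y "\<lambda>j. [(c j, e j)]" "[0..<m]"]
    by (simp add: can_inv_pair_def c_def coeff_concat)
  also have "\<dots> = sum_list (map (\<lambda>j. mA z y y a (mA y x y (g j h) (coord i (e j)))) [0..<m])"
    using a h c unfolding can_map_single coord_def
    by (intro arg_cong[where f = sum_list] map_cong refl)
      (simp add: coeff_mA_left rho_closed e_closed c_def mA_assoc g_closed coeff_closed)
  also have "\<dots> = mA z y y a (sum_list (map (\<lambda>j. mA y x y (g j h) (coord i (e j))) [0..<m]))"
    using a h by (subst mA_sum_list_right) (auto simp: mA_closed g_closed coord_closed e_closed)
  also have "\<dots> = mA z y y a (sA (f i h) (eA y))"
    by (simp add: g_coord_sum[OF h])
  also have "\<dots> = sA (f i h) a"
    using a by (simp add: mA_sA_right eA_closed mA_eA_right)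
  finally show ?thesis .
qed

lemma can_can_inv:
  assumes zs: "set zs \<subseteq> Ac z y \<times> Hc x y"
  shows "ktensor_eq (Ac z y) sA (Hc x y) sH (can_map mA rho z x y (can_inv z zs)) zs"
proof (rule ktensor_eq_by_dual_basis[OF A_kmodule H_kmodule hb_closed])
  show "\<And>h. h \<in> Hc x y \<Longrightarrow> h = sum_list (map (\<lambda>i. sH (f i h) (hb i)) [0..<n])"
    by (rule H_expand)
  show "set (can_map mA rho z x y (can_inv z zs)) \<subseteq> Ac z y \<times> Hc x y"
    using can_map_respects[OF tensor_eq_refl[OF can_inv_closed[OF zs]]]
    by (simp add: ktensor_eq_def tensor_eq_def)
  show "set zs \<subseteq> Ac z y \<times> Hc x y" by (rule zs)
  fix i
  have "coeff i (can_map mA rho z x y (can_inv z zs)) =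
      sum_list (map (\<lambda>p. coeff i (can_map mA rho z x y (can_inv_pair z p))) zs)"
    by (simp add: can_inv_def can_map_concat coeff_concat)
  also have "\<dots> = coeff i zs"
    unfolding coeff_def[of i zs] using zs
    by (intro arg_cong[where f = sum_list] map_cong refl) (auto simp: coeff_can_map_can_inv_pair)
  finally show "sum_list (map (\<lambda>(a, h). sA (f i h) a) (can_map mA rho z x y (can_inv z zs))) =
      sum_list (map (\<lambda>(a, h). sA (f i h) a) zs)"
    unfolding coeff_def .
qed

lemma can_map_respects_iff:
  assumes "set xs \<subseteq> Ac z x \<times> Ac x y" and "set ys \<subseteq> Ac z x \<times> Ac x y"
  shows "coinv_tensor_eq z x y xs ys \<longleftrightarrow>
    ktensor_eq (Ac z y) sA (Hc x y) sH (can_map mA rho z x y xs) (can_map mA rho z x y ys)"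
proof
  assume "ktensor_eq (Ac z y) sA (Hc x y) sH (can_map mA rho z x y xs) (can_map mA rho z x y ys)"
  then have "coinv_tensor_eq z x y (can_inv z (can_map mA rho z x y xs)) (can_inv z (can_map mA rho z x y ys))"
    by (rule can_inv_respects)
  then show "coinv_tensor_eq z x y xs ys"
    using can_inv_can[OF assms(1)] can_inv_can[OF assms(2)] by (blast intro: tensor_eq_trans tensor_eq_sym)
qed (rule can_map_respects)

lemma can_map_surjective:
  assumes "set zs \<subseteq> Ac z y \<times> Hc x y"
  shows "\<exists>xs. set xs \<subseteq> Ac z x \<times> Ac x y \<and> ktensor_eq (Ac z y) sA (Hc x y) sH (can_map mA rho z x y xs) zs"
  using can_inv_closed[OF assms] can_can_inv[OF assms] by blast

lemma galois_component:
  "(\<forall>xs ys. set xs \<subseteq> Ac z x \<times> Ac x y \<longrightarrow> set ys \<subseteq> Ac z x \<times> Ac x y \<longrightarrow>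
      (coinv_tensor_eq z x y xs ys \<longleftrightarrow>
       ktensor_eq (Ac z y) sA (Hc x y) sH (can_map mA rho z x y xs) (can_map mA rho z x y ys))) \<and>
   (\<forall>zs. set zs \<subseteq> Ac z y \<times> Hc x y \<longrightarrow>
      (\<exists>xs. set xs \<subseteq> Ac z x \<times> Ac x y \<and> ktensor_eq (Ac z y) sA (Hc x y) sH (can_map mA rho z x y xs) zs))"
  using can_map_respects_iff can_map_surjective by blast

end

lemma (in comodule_category) galois_dual_bases_exist:
  assumes proj_A: "fg_projective (B x) (mA x x x) (Ac x y) (mA x x y)"
    and proj_H: "fg_projective UNIV (*) (Hc x y) sH"
    and delta_xy_surj: "Hom (B x) (Ac x y) (mA x x y) (Ac x x) (mA x x x)
      \<subseteq> delta_map Ac mA rho x y x ` Hom UNIV (Hc x y) sH (Ac y x) sA"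
    and delta_yy_inj: "inj_on (delta_map Ac mA rho x y y) (Hom UNIV (Hc x y) sH (Ac y y) sA)"
  obtains n f hb m phi e g
  where "galois_dual_bases Hc sH mH eH Delta eps Ac sA mA eA rho x y n f hb m phi e g"
proof -
  obtain n f hb where f: "\<And>i. f i \<in> Hom UNIV (Hc x y) sH UNIV (*)" and hb: "\<And>i. hb i \<in> Hc x y"
    and H_expand: "\<And>h. h \<in> Hc x y \<Longrightarrow> h = sum_list (map (\<lambda>i. sH (f i h) (hb i)) [0..<n])"
    by (rule fg_projective_dual_basis[OF proj_H, where u = 1]) (use H_add H_sH in auto)
  obtain m phi e where phi: "\<And>j. phi j \<in> Hom (B x) (Ac x y) (mA x x y) (B x) (mA x x x)"
    and e: "\<And>j. e j \<in> Ac x y"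
    and A_expand: "\<And>a. a \<in> Ac x y \<Longrightarrow> a = sum_list (map (\<lambda>j. mA x x y (phi j a) (e j)) [0..<m])"
    by (rule fg_projective_dual_basis[OF proj_A zero_coinv eA_coinv])
      (auto simp: A_add mA_closed coinv_subset mA_eA_right mA_zero_right)
  have phi_Hom: "phi j \<in> Hom (B x) (Ac x y) (mA x x y) (Ac x x) (mA x x x)" for j
    using phi Hom_subset_codomain[OF subsetI[OF coinv_subset]] by blast
  define g where "g j = inv_into (Hom UNIV (Hc x y) sH (Ac y x) sA) (delta_map Ac mA rho x y x) (phi j)" for j
  have "phi j \<in> delta_map Ac mA rho x y x ` Hom UNIV (Hc x y) sH (Ac y x) sA" for j
    using phi_Hom delta_xy_surj by blast
  then have "g j \<in> Hom UNIV (Hc x y) sH (Ac y x) sA" "delta_map Ac mA rho x y x (g j) = phi j" for j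
    unfolding g_def by (simp_all add: inv_into_into f_inv_into_f)
  moreover have "phi j a \<in> B x" if "a \<in> Ac x y" for j a
    using phi[of j] that by (simp add: Hom_def lin_map_def)
  ultimately have "galois_dual_bases Hc sH mH eH Delta eps Ac sA mA eA rho x y n f hb m phi e g"
    using H A f hb H_expand e A_expand delta_yy_inj
    by (simp add: galois_dual_bases_def galois_dual_bases_axioms_def comodule_category_def)
  then show ?thesis by (rule that)
qed

theorem proposition7p3:
  fixes Hc :: "'x \<Rightarrow> 'x \<Rightarrow> 'h::ab_group_add set" and sH :: "'k::comm_ring_1 \<Rightarrow> 'h \<Rightarrow> 'h"
    and mH :: "'x \<Rightarrow> 'x \<Rightarrow> 'x \<Rightarrow> 'h \<Rightarrow> 'h \<Rightarrow> 'h" and eH :: "'x \<Rightarrow> 'h"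
    and Delta :: "'x \<Rightarrow> 'x \<Rightarrow> 'h \<Rightarrow> ('h \<times> 'h) list" and eps :: "'x \<Rightarrow> 'x \<Rightarrow> 'h \<Rightarrow> 'k"
    and Ac :: "'x \<Rightarrow> 'x \<Rightarrow> 'a::ab_group_add set" and sA :: "'k \<Rightarrow> 'a \<Rightarrow> 'a"
    and mA :: "'x \<Rightarrow> 'x \<Rightarrow> 'x \<Rightarrow> 'a \<Rightarrow> 'a \<Rightarrow> 'a" and eA :: "'x \<Rightarrow> 'a"
    and rho :: "'x \<Rightarrow> 'x \<Rightarrow> 'a \<Rightarrow> ('a \<times> 'h) list"
  assumes H: "semi_hopf_cat Hc sH mH eH Delta eps"
    and A: "comodule_cat Hc sH mH eH Delta eps Ac sA mA eA rho"
    and proj_A: "\<forall>x y. fg_projective (coinv Hc sH eH Ac sA rho x) (mA x x x) (Ac x y) (mA x x y)"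
    and proj_H: "\<forall>x y. fg_projective (UNIV :: 'k set) (*) (Hc x y) sH"
    and delta_xy: "\<forall>x y. bij_betw (delta_map Ac mA rho x y x)
                     (Hom (UNIV :: 'k set) (Hc x y) sH (Ac y x) sA)
                     (Hom (coinv Hc sH eH Ac sA rho x) (Ac x y) (mA x x y) (Ac x x) (mA x x x))"
    and delta_yy: "\<forall>x y. bij_betw (delta_map Ac mA rho x y y)
                     (Hom (UNIV :: 'k set) (Hc x y) sH (Ac y y) sA)
                     (Hom (coinv Hc sH eH Ac sA rho x) (Ac x y) (mA x x y) (Ac x y) (mA x x y))"
  shows "galois_cat_ext Hc sH eH Ac sA mA rho"
proof -
  interpret comodule_category Hc sH mH eH Delta eps Ac sA mA eA rho
    using H A by (simp add: comodule_category_def semi_hopf_cat_def)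
  have "\<exists>n f hb m phi e g. galois_dual_bases Hc sH mH eH Delta eps Ac sA mA eA rho x y n f hb m phi e g"
    for x y
    using proj_A proj_H delta_xy delta_yy
    by (metis galois_dual_bases_exist bij_betw_def bij_betw_imp_surj_on order_refl)
  then show ?thesis
    unfolding galois_cat_ext_def by (metis galois_dual_bases.galois_component)
qed

end
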